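(* Fix an erasure probability $\epsilon\in(0,1)$ and a rate $R<1-\epsilon$. For $N=2^n$, consider a polar code of length $N$ and rate $R$ constructed for the binary erasure channel BEC($\epsilon$), transmitted over BEC($\epsilon$), and decoded by the algorithm described in the context on its pruned parity check matrix. Let $n_r$ be the total number of reference variables used and $n_e$ the number of remaining parity-check rows (both random, depending on the erasure pattern). Then for any $q,p>0$, $$\lim_{N\to\infty}\mathrm{E}\left\{(N\log N)\,n_r^{q}\,n_e^{p}\right\}=0.$$
   Context: Polar code: $\mathbf{G}_N=\mathbf{B}_N\mathbf{F}^{\otimes n}$ ($\mathbf{B}_N$ bit-reversal permutation, $\mathbf{F}=\begin{bmatrix}1&0\\1&1\end{bmatrix}$), codeword $\mathbf{c}^T=\mathbf{u}^T\mathbf{G}_N$ with $\mathbf{u}_{\bar{\mathcal{A}}}=0$, where the information set $\mathcal{A}$ of size $K\approx RN$ is chosen by Arikan's standard construction for BEC($\epsilon$) (so that successive cancellation decoding has block error probability at most $2^{-N^\beta}$ for any $\beta<1/2$). Pruned parity check matrix: start from the standard polar factor graph (layers $v^{(0)}=\mathbf{u},\dots,v^{(n)}=\mathbf{c}$ of $N$ variables each; each stage-$s$ butterfly $(a,b)$ gives checks $v^{(s)}_a\oplus v^{(s)}_b\oplus v^{(s+1)}_a=0$, $v^{(s)}_b\oplus v^{(s+1)}_b=0$, equivalent to $\mathbf{c}^T=\mathbf{u}^T\mathbf{G}_N$), and iterate until none applies: remove frozen variables; remove a degree-1 check together with its neighbor; merge a hidden variable into a codeword variable joined to it by a degree-2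 check (removing the check); remove a degree-1 hidden variable and its check; remove a degree-2 hidden variable merging its two checks; merge two hidden variables joined by a degree-2 check (removing the check). The result is a sparse $(N'-K)\times N'$ matrix over codeword and surviving hidden variables. Decoding algorithm: Stage 1 (BP/peeling): codeword variables not erased are known, all others unknown; repeatedly, for any row with exactly one unknown variable, solve for it; stop when no such row exists. A row is "decoded" if all its variables are known; let $n_c$ be the number of decoded rows. If all variables are known, set $n_r=n_e=0$ and stop. Stage 2 (triangulation): repeatedly (a) mark $n'_r\ge1$ currently unknown, not-yet-diagonalized variables as reference variables (by any selection rule), (b) perform diagonal extension steps as long as possible: find an undecoded, not-yet-pivot row having exactly one variable that is neither known, reference, nor already diagonalized, and make that row a pivot row for that variable (diagonalizing it); continue until every variable is known, a reference variable, or diagonalized. Let $n_r$ be the total number of reference variables, $n_u$ the number of pivot rows (= diagonalized variables), and $n_e=(N'-K)-n_c-n_u$ the number of remaining rows. The expectation is over the channel erasures. *)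

theory Defs
  imports Complex_Main
begin

text \<open>Bhattacharyya parameter Z(W_N^{(i)}) of the i-th synthetic channel (0-indexed, N = 2^n)
  of BEC(eps) for the generator matrix G_N = B_N F^{(x)n} (Arikan's recursion, exact for BEC).\<close>
fun bhatt :: "real \<Rightarrow> nat \<Rightarrow> nat \<Rightarrow> real" where
  "bhatt eps 0 i = eps"
| "bhatt eps (Suc n) i =
     (let z = bhatt eps n (i div 2) in if even i then 2 * z - z ^ 2 else z ^ 2)"

definition arikan_info_set :: "real \<Rightarrow> nat \<Rightarrow> nat \<Rightarrow> nat set \<Rightarrow> bool" where
  "arikan_info_set eps n K A \<longleftrightarrow>
     A \<subseteq> {..<2 ^ n} \<and> card A = K \<and>
     (\<forall>i\<in>A. \<forall>j\<in>{..<2 ^ n} - A. bhatt eps n i \<le> bhatt eps n j)"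

fun bitrev :: "nat \<Rightarrow> nat \<Rightarrow> nat" where
  "bitrev 0 i = 0"
| "bitrev (Suc n) i = (i mod 2) * 2 ^ n + bitrev n (i div 2)"

text \<open>Variables are (layer, index); layer n holds the codeword variables, layers < n are hidden.
  Check ids are (stage, a, flag). Rows are homogeneous GF(2) equations.\<close>
type_synonym var = "nat \<times> nat"
type_synonym chk = "nat \<times> nat \<times> bool"

datatype graph = Graph (gvars: "var set") (gchecks: "chk set") (gnbr: "chk \<Rightarrow> var set")

definition symdiff :: "'a set \<Rightarrow> 'a set \<Rightarrow> 'a set" where
  "symdiff S T = (S - T) \<union> (T - S)"

definition hidden :: "nat \<Rightarrow> var \<Rightarrow> bool" where
  "hidden n v \<longleftrightarrow> fst v < n"

definition codeword :: "nat \<Rightarrow> var \<Rightarrow> bool" where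
  "codeword n v \<longleftrightarrow> fst v = n"

definition frozen :: "nat \<Rightarrow> nat set \<Rightarrow> var set" where
  "frozen n A = {(0, i) | i. i < 2 ^ n \<and> i \<notin> A}"

text \<open>Standard polar factor graph: stage-s butterflies (a, a + 2^s) with bit s of a equal to 0;
  checks v^s_a + v^s_b + v^{s+1}_a = 0 and v^s_b + v^{s+1}_b = 0. This gives
  v^(n) = u F^{(x)n}, i.e. codeword bit c_j = v^(n)_{bitrev n j} for c = u B_N F^{(x)n}.
  Frozen variables are removed (they are known zeros).\<close>
definition butterfly_nbr :: "chk \<Rightarrow> var set" where
  "butterfly_nbr c = (case c of (s, a, False) \<Rightarrow> {(s, a), (s, a + 2 ^ s), (Suc s, a)}
                              | (s, a, True) \<Rightarrow> {(s, a + 2 ^ s), (Suc s, a + 2 ^ s)})"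

definition init_graph :: "nat \<Rightarrow> nat set \<Rightarrow> graph" where
  "init_graph n A =
     Graph ({(s, i). s \<le> n \<and> i < 2 ^ n} - frozen n A)
           {(s, a, f). s < n \<and> a < 2 ^ n \<and> even (a div 2 ^ s)}
           (\<lambda>c. butterfly_nbr c - frozen n A)"

definition vdeg_checks :: "graph \<Rightarrow> var \<Rightarrow> chk set" where
  "vdeg_checks G v = {c \<in> gchecks G. v \<in> gnbr G c}"

text \<open>Replace variable h by variable w in all rows (GF(2): duplicates cancel) and drop h.\<close>
definition subst_var :: "var \<Rightarrow> var \<Rightarrow> graph \<Rightarrow> graph" where
  "subst_var h w G = Graph (gvars G - {h}) (gchecks G)
     (\<lambda>c. if h \<in> gnbr G c then symdiff (gnbr G c - {h}) {w} else gnbr G c)"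

inductive prune_step :: "nat \<Rightarrow> graph \<Rightarrow> graph \<Rightarrow> bool" for n where
  deg1_check: "c \<in> gchecks G \<Longrightarrow> gnbr G c = {v} \<Longrightarrow>
     prune_step n G (Graph (gvars G - {v}) (gchecks G - {c}) (\<lambda>d. gnbr G d - {v}))"
| merge_cw: "c \<in> gchecks G \<Longrightarrow> gnbr G c = {h, w} \<Longrightarrow> h \<noteq> w \<Longrightarrow> hidden n h \<Longrightarrow> codeword n w \<Longrightarrow>
     prune_step n G (subst_var h w (Graph (gvars G) (gchecks G - {c}) (gnbr G)))"
| deg1_hidden: "h \<in> gvars G \<Longrightarrow> hidden n h \<Longrightarrow> vdeg_checks G h = {c} \<Longrightarrow>
     prune_step n G (Graph (gvars G - {h}) (gchecks G - {c}) (\<lambda>d. gnbr G d - {h}))"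
| deg0_hidden: "h \<in> gvars G \<Longrightarrow> hidden n h \<Longrightarrow> vdeg_checks G h = {} \<Longrightarrow>
     prune_step n G (Graph (gvars G - {h}) (gchecks G) (gnbr G))"
| deg2_hidden: "h \<in> gvars G \<Longrightarrow> hidden n h \<Longrightarrow> vdeg_checks G h = {c1, c2} \<Longrightarrow> c1 \<noteq> c2 \<Longrightarrow>
     prune_step n G (Graph (gvars G - {h}) (gchecks G - {c2})
                      ((gnbr G)(c1 := symdiff (gnbr G c1) (gnbr G c2))))"
| merge_hidden: "c \<in> gchecks G \<Longrightarrow> gnbr G c = {h1, h2} \<Longrightarrow> h1 \<noteq> h2 \<Longrightarrow>
     hidden n h1 \<Longrightarrow> hidden n h2 \<Longrightarrow>
     prune_step n G (subst_var h1 h2 (Graph (gvars G) (gchecks G - {c}) (gnbr G)))"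

definition pruned_graph :: "nat \<Rightarrow> nat set \<Rightarrow> graph \<Rightarrow> bool" where
  "pruned_graph n A G \<longleftrightarrow> (prune_step n)\<^sup>*\<^sup>* (init_graph n A) G \<and> (\<nexists>G'. prune_step n G G')"

text \<open>E is the set of erased codeword positions j < 2^n; codeword bit c_j is the variable
  (n, bitrev n j).\<close>
definition erased :: "nat \<Rightarrow> nat set \<Rightarrow> var \<Rightarrow> bool" where
  "erased n E v \<longleftrightarrow> bitrev n (snd v) \<in> E"

text \<open>Stage 1 (peeling): the set of known variables at the end of BP (order independent).\<close>
inductive known :: "nat \<Rightarrow> graph \<Rightarrow> nat set \<Rightarrow> var \<Rightarrow> bool" for n G E where
  channel: "v \<in> gvars G \<Longrightarrow> codeword n v \<Longrightarrow> \<not> erased n E v \<Longrightarrow> known n G E v"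
| peel: "c \<in> gchecks G \<Longrightarrow> v \<in> gnbr G c \<Longrightarrow> (\<forall>w \<in> gnbr G c - {v}. known n G E w) \<Longrightarrow>
     known n G E v"

definition known_set :: "nat \<Rightarrow> graph \<Rightarrow> nat set \<Rightarrow> var set" where
  "known_set n G E = {v. known n G E v}"

text \<open>Stage 2 states: (reference variables, diagonalized variables, pivot rows).\<close>
type_synonym tstate = "var set \<times> var set \<times> chk set"

definition diag_ok :: "graph \<Rightarrow> var set \<Rightarrow> tstate \<Rightarrow> chk \<Rightarrow> var \<Rightarrow> bool" where
  "diag_ok G Kn st c v \<longleftrightarrow> (case st of (R, D, P) \<Rightarrow>
     c \<in> gchecks G \<and> \<not> gnbr G c \<subseteq> Kn \<and> c \<notin> P \<and> gnbr G c - (Kn \<union> R \<union> D) = {v})"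

inductive tri_step :: "graph \<Rightarrow> var set \<Rightarrow> tstate \<Rightarrow> tstate \<Rightarrow> bool" for G Kn where
  diag: "diag_ok G Kn (R, D, P) c v \<Longrightarrow> tri_step G Kn (R, D, P) (R, insert v D, insert c P)"
| ref: "(\<nexists>c v. diag_ok G Kn (R, D, P) c v) \<Longrightarrow> S \<noteq> {} \<Longrightarrow>
     S \<subseteq> gvars G - (Kn \<union> R \<union> D) \<Longrightarrow> tri_step G Kn (R, D, P) (R \<union> S, D, P)"

definition valid_run :: "nat \<Rightarrow> graph \<Rightarrow> nat set \<Rightarrow> tstate \<Rightarrow> bool" where
  "valid_run n G E st \<longleftrightarrow>
     (let Kn = known_set n G E in
       gvars G \<subseteq> Kn \<or>
       ((tri_step G Kn)\<^sup>*\<^sup>* ({}, {}, {}) st \<and>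
        (case st of (R, D, P) \<Rightarrow> gvars G \<subseteq> Kn \<union> R \<union> D)))"

definition nr_ne :: "nat \<Rightarrow> graph \<Rightarrow> nat set \<Rightarrow> tstate \<Rightarrow> nat \<times> nat" where
  "nr_ne n G E st =
     (let Kn = known_set n G E;
          nc = card {c \<in> gchecks G. gnbr G c \<subseteq> Kn} in
      if gvars G \<subseteq> Kn then (0, 0)
      else (case st of (R, D, P) \<Rightarrow> (card R, card (gchecks G) - nc - card P)))"

definition expected_cost ::
  "real \<Rightarrow> real \<Rightarrow> real \<Rightarrow> nat \<Rightarrow> graph \<Rightarrow> (nat set \<Rightarrow> tstate) \<Rightarrow> real" where
  "expected_cost eps q p n G run =
     (\<Sum>E\<in>Pow {..<2 ^ n}.
        eps ^ card E * (1 - eps) ^ (2 ^ n - card E) *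
        (real (2 ^ n) * log 2 (real (2 ^ n)) *
         real (fst (nr_ne n G E (run E))) powr q * real (snd (nr_ne n G E (run E))) powr p))"

end

theory Submission
  imports Defs "HOL-Real_Asymp.Real_Asymp"
begin

text \<open>Arikan's recursion maps a Bhattacharyya parameter \<open>z\<close> to \<open>2z - z\<^sup>2\<close> and \<open>z\<^sup>2\<close>. It
  keeps the mean of the parameters equal to \<open>eps\<close>, while the potential \<open>sqrt (z (1 - z))\<close>
  shrinks by the factor \<open>7/8\<close> per level; once the channels have polarized, every further one
  bit of the index squares \<open>z\<close>. Hence all but a fraction \<open>eps + o(1)\<close> of the \<open>N = 2\<^sup>n\<close>
  channels have \<open>z \<le> 2\<^sup>-\<^sup>D\<^sup>n\<close>, and since \<open>R < 1 - eps\<close> some frozen index, hence by the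
  construction every information index, has \<open>z \<le> 2\<^sup>-\<^sup>D\<^sup>n\<close>.

  On the BEC, \<open>z\<^sub>i\<close> is exactly the probability that successive cancellation cannot recover
  \<open>u\<^sub>i\<close>. If no information bit is lost, peeling on the full factor graph recovers every
  variable, every pruning step preserves this, and then \<open>n\<^sub>r = n\<^sub>e = 0\<close>. Otherwise
  \<open>n\<^sub>r\<close> and \<open>n\<^sub>e\<close> are bounded by the size \<open>O(N log N)\<close> of the factor graph, so by the
  union bound the expected cost is at most \<open>poly(N) N 2\<^sup>-\<^sup>D\<^sup>n \<le> 2\<^sup>-\<^sup>n\<close> for
  \<open>D = 2p + 2q + 4\<close>.\<close>

section \<open>Polarization of the Bhattacharyya parameters\<close>

lemma sum_lessThan_mult_blocks:
  fixes f :: "nat \<Rightarrow> 'a::comm_monoid_add"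
  shows "(\<Sum>i<a*b. f i) = (\<Sum>k<a. \<Sum>r<b. f (k*b + r))"
proof -
  have "(\<Sum>i<a*b. f i) = (\<Sum>k<a. sum f {k*b..<k*b+b})" by (rule sum.nat_group[symmetric])
  also have "\<dots> = (\<Sum>k<a. \<Sum>r<b. f (k*b + r))"
  proof (rule sum.cong[OF refl])
    fix k
    show "sum f {k*b..<k*b+b} = (\<Sum>r<b. f (k*b + r))"
      using sum.shift_bounds_nat_ivl[of f 0 "k*b" b] by (simp add: add.commute atLeast0LessThan)
  qed
  finally show ?thesis .
qed

lemma sum_lessThan_double:
  fixes f :: "nat \<Rightarrow> 'a::comm_monoid_add"
  shows "(\<Sum>i<2*a. f i) = (\<Sum>k<a. f (2*k) + f (2*k+1))"
  using sum_lessThan_mult_blocks[of f a 2] by (simp add: mult.commute numeral_2_eq_2)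

lemma bhatt_bounds:
  assumes "0 \<le> eps" "eps \<le> 1"
  shows "0 \<le> bhatt eps n i \<and> bhatt eps n i \<le> 1"
proof (induction n arbitrary: i)
  case 0 then show ?case using assms by simp
next
  case (Suc n)
  define z where "z = bhatt eps n (i div 2)"
  have z: "0 \<le> z" "z \<le> 1" using Suc z_def by auto
  have minus_eq: "2*z - z^2 = z*(2-z)" "2*z - z^2 = 1 - (1-z)^2"
    by (simp_all add: power2_eq_square algebra_simps)
  have "0 \<le> 2*z - z^2" unfolding minus_eq(1) using z by simp
  moreover have "2*z - z^2 \<le> 1" unfolding minus_eq(2) by simp
  moreover have "0 \<le> z^2" "z^2 \<le> 1" using z by (auto simp: power_le_one)
  ultimately show ?case by (simp add: z_def[symmetric] Let_def)
qed

lemma bhatt_Suc_even [simp]: "bhatt eps (Suc n) (2*k) = 2 * bhatt eps n k - (bhatt eps n k)^2"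
  by (simp add: Let_def)

lemma bhatt_Suc_odd [simp]: "bhatt eps (Suc n) (Suc (2*k)) = (bhatt eps n k)^2"
  by (simp add: Let_def)

declare bhatt.simps(2) [simp del]

lemma sum_bhatt: "(\<Sum>i<2^n. bhatt eps n i) = 2^n * eps"
proof (induction n)
  case 0 then show ?case by simp
next
  case (Suc n)
  have "(\<Sum>i<2^Suc n. bhatt eps (Suc n) i) = (\<Sum>k<2^n. 2 * bhatt eps n k)"
    using sum_lessThan_double[of "bhatt eps (Suc n)" "2^n"] by simp
  also have "\<dots> = 2^Suc n * eps" using Suc by (simp add: sum_distrib_left[symmetric])
  finally show ?case .
qed

text \<open>Substituting \<open>z = a\<^sup>2\<close>, \<open>1 - z = b\<^sup>2\<close>, \<open>2 - z = c\<^sup>2\<close>, \<open>1 + z = d\<^sup>2\<close>, the left side is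
  \<open>a b (b c + a d)\<close>, and \<open>(b c + a d)\<^sup>2 \<le> (a\<^sup>2 + b\<^sup>2) (c\<^sup>2 + d\<^sup>2) = 3\<close> by Cauchy-Schwarz.\<close>
lemma polar_step_potential_le:
  fixes z :: real
  assumes z: "0 \<le> z" "z \<le> 1"
  shows "sqrt ((2*z - z^2) * (1 - (2*z - z^2))) + sqrt (z^2 * (1 - z^2)) \<le> 7/4 * sqrt (z * (1 - z))"
proof -
  define a where "a = sqrt z"
  define b where "b = sqrt (1 - z)"
  define c where "c = sqrt (2 - z)"
  define d where "d = sqrt (1 + z)"
  have a2: "a^2 = z" and b2: "b^2 = 1 - z" and c2: "c^2 = 2 - z" and d2: "d^2 = 1 + z"
    using z by (auto simp: a_def b_def c_def d_def)
  have pos: "0 \<le> a" "0 \<le> b" "0 \<le> c" "0 \<le> d" using z by (auto simp: a_def b_def c_def d_def)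
  have "(2*z - z^2) * (1 - (2*z - z^2)) = a^2*c^2*(b^2)^2"
    unfolding a2 b2 c2 by (simp add: power2_eq_square algebra_simps)
  also have "\<dots> = (a*c*b^2)^2" by (simp add: power_mult_distrib)
  finally have minus: "sqrt ((2*z - z^2) * (1 - (2*z - z^2))) = a*c*b^2" using pos by simp
  have "z^2 * (1 - z^2) = (a^2)^2*b^2*d^2" unfolding a2 b2 d2 by (simp add: power2_eq_square algebra_simps)
  also have "\<dots> = (a^2*b*d)^2" by (simp add: power_mult_distrib)
  finally have plus: "sqrt (z^2 * (1 - z^2)) = a^2*b*d" using pos by simp
  have base: "sqrt (z * (1 - z)) = a*b" using z by (simp add: a_def b_def real_sqrt_mult)
  have "(b*c + a*d)^2 = b^2*c^2 + a^2*d^2 + 2*(a*c)*(b*d)" by (simp add: power2_eq_square algebra_simps)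
  also have "\<dots> \<le> (a^2 + b^2) * (c^2 + d^2)"
    using sum_squares_bound[of "a*c" "b*d"] by (simp add: power_mult_distrib algebra_simps)
  also have "\<dots> \<le> (7/4)^2" by (simp add: a2 b2 c2 d2 power_divide)
  finally have "b*c + a*d \<le> 7/4" by (rule power2_le_imp_le) simp
  have "a*c*b^2 + a^2*b*d = (a*b) * (b*c + a*d)" by (simp add: power2_eq_square algebra_simps)
  also have "\<dots> \<le> (a*b) * (7/4)" using \<open>b*c + a*d \<le> 7/4\<close> pos by (intro mult_left_mono) auto
  finally show ?thesis unfolding minus plus base by simp
qed

lemma sum_bhatt_potential_le:
  assumes "0 \<le> eps" "eps \<le> 1"
  shows "(\<Sum>i<2^n. sqrt (bhatt eps n i * (1 - bhatt eps n i))) \<le> (7/4)^n * sqrt (eps * (1 - eps))"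
proof (induction n)
  case 0 then show ?case by simp
next
  case (Suc n)
  let ?f = "\<lambda>z. sqrt (z * (1 - z))"
  have "(\<Sum>i<2^Suc n. ?f (bhatt eps (Suc n) i))
      = (\<Sum>k<2^n. ?f (bhatt eps (Suc n) (2*k)) + ?f (bhatt eps (Suc n) (Suc (2*k))))"
    using sum_lessThan_double[of "\<lambda>i. ?f (bhatt eps (Suc n) i)" "2^n"] by simp
  also have "\<dots> \<le> (\<Sum>k<2^n. 7/4 * ?f (bhatt eps n k))"
  proof (rule sum_mono)
    fix k
    show "?f (bhatt eps (Suc n) (2*k)) + ?f (bhatt eps (Suc n) (Suc (2*k))) \<le> 7/4 * ?f (bhatt eps n k)"
      unfolding bhatt_Suc_even bhatt_Suc_odd
      by (rule polar_step_potential_le) (use bhatt_bounds[OF assms] in auto)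
  qed
  also have "\<dots> = 7/4 * (\<Sum>k<2^n. ?f (bhatt eps n k))" by (simp only: sum_distrib_left)
  also have "\<dots> \<le> 7/4 * ((7/4)^n * sqrt (eps * (1 - eps)))" using Suc by (intro mult_left_mono) auto
  finally show ?case by simp
qed

fun popcount :: "nat \<Rightarrow> nat \<Rightarrow> nat" where
  "popcount 0 i = 0"
| "popcount (Suc t) i = i mod 2 + popcount t (i div 2)"

lemma popcount_mult_pow2_add: "popcount m (k * 2^m + r) = popcount m r"
proof (induction m arbitrary: k r)
  case 0 then show ?case by simp
next
  case (Suc m)
  have split: "k * 2^Suc m + r = r + 2 * (k * 2^m)" by simp
  have "(k * 2^Suc m + r) mod 2 = r mod 2" unfolding split by simp
  moreover have "(k * 2^Suc m + r) div 2 = k * 2^m + r div 2" unfolding split by simp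
  ultimately show ?case using Suc by simp
qed

lemma sum_half_pow_popcount: "(\<Sum>r<2^m. (1/2::real) ^ popcount m r) = (3/2)^m"
proof (induction m)
  case 0 then show ?case by simp
next
  case (Suc m)
  have "(\<Sum>r<2^Suc m. (1/2::real) ^ popcount (Suc m) r) = (\<Sum>k<2^m. 3/2 * (1/2::real) ^ popcount m k)"
    using sum_lessThan_double[of "\<lambda>r. (1/2::real) ^ popcount (Suc m) r" "2^m"] by simp
  also have "\<dots> = 3/2 * (\<Sum>k<2^m. (1/2::real) ^ popcount m k)" by (simp only: sum_distrib_left)
  also have "\<dots> = (3/2)^Suc m" using Suc by simp
  finally show ?case .
qed

text \<open>Along the path from level \<open>n0\<close> to level \<open>n0 + t\<close>, a zero bit at most doubles \<open>Z\<close>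
  (losing one from the exponent \<open>L\<close>) and a one bit squares \<open>Z\<close> (doubling the exponent).\<close>
lemma bhatt_descendant_le:
  assumes eps: "0 \<le> eps" "eps \<le> 1"
    and ancestor: "bhatt eps n0 (i div 2^t) \<le> 2 powr (-L)"
  shows "bhatt eps (n0 + t) i \<le> 2 powr (-(L - (real t - real (popcount t i))) * 2 ^ popcount t i)"
  using ancestor
proof (induction t arbitrary: i)
  case 0 then show ?case by simp
next
  case (Suc t)
  define z where "z = bhatt eps (n0 + t) (i div 2)"
  define u where "u = popcount t (i div 2)"
  define x where "x = -(L - (real t - real u)) * 2^u"
  have "i div 2 div 2^t = i div 2^Suc t" by (simp add: div_mult2_eq)
  then have z_le: "z \<le> 2 powr x" using Suc unfolding z_def x_def u_def by simp
  have z0: "0 \<le> z" using bhatt_bounds[OF eps] z_def by simp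
  have step: "bhatt eps (n0 + Suc t) i = (if even i then 2*z - z^2 else z^2)"
    by (simp add: z_def bhatt.simps(2) Let_def)
  show ?case
  proof (cases "even i")
    case True
    then have "bhatt eps (n0 + Suc t) i = 2*z - z^2" using step by simp
    also have "\<dots> \<le> 2 * z" using z0 by simp
    also have "\<dots> \<le> 2 * 2 powr x" using z_le by simp
    also have "\<dots> = 2 powr (x + 1)" by (simp add: powr_add)
    also have "\<dots> \<le> 2 powr (x + 2^u)" by (intro powr_mono) auto
    also have "x + 2^u = -(L - (real (Suc t) - real u)) * 2^u" by (simp add: x_def algebra_simps)
    finally show ?thesis using True by (simp add: u_def)
  next
    case False
    then have "bhatt eps (n0 + Suc t) i = z^2" using step by simp
    also have "\<dots> \<le> (2 powr x)^2" using z_le z0 by (intro power_mono) auto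
    also have "\<dots> = 2 powr (2*x)" by (simp add: power2_eq_square powr_add[symmetric])
    also have "2*x = -(L - (real (Suc t) - real (Suc u))) * 2^Suc u" by (simp add: x_def algebra_simps)
    finally show ?thesis using False by (simp add: u_def odd_iff_mod_2_eq_one)
  qed
qed

lemma one_le_mean_plus_potential:
  fixes z d :: real
  assumes z: "z \<le> 1" and d: "0 < d" "d \<le> 1/2" and zd: "d < z"
  shows "1 \<le> z/(1-d) + sqrt (z*(1-z)) * sqrt (2/d)"
proof (cases "z > 1-d")
  case True
  then have "1 \<le> z/(1-d)" using d by (simp add: field_simps)
  moreover have "0 \<le> z*(1-z)" using z zd d by simp
  then have "0 \<le> sqrt (z*(1-z)) * sqrt (2/d)" using d by simp
  ultimately show ?thesis by linarith
next
  case False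
  have "z*(1-z) - d*(1-d) = (z-d)*(1-d-z)" by (simp add: algebra_simps)
  also have "\<dots> \<ge> 0" using False zd by simp
  finally have "z*(1-z) \<ge> d*(1-d)" by simp
  moreover have "d*(1-d) \<ge> d/2"
  proof -
    have "d*d \<le> d*(1/2)" using d by (intro mult_left_mono) auto
    then show ?thesis by (simp add: algebra_simps)
  qed
  ultimately have "z*(1-z) \<ge> d/2" by linarith
  then have "z*(1-z)*(2/d) \<ge> 1" using d by (simp add: field_simps)
  then have "sqrt (z*(1-z)) * sqrt (2/d) \<ge> 1" by (simp flip: real_sqrt_mult)
  moreover have "0 \<le> z/(1-d)" using zd d by simp
  ultimately show ?thesis by linarith
qed

lemma quarter_power_eq_powr: "(1/4::real)^(m+1) = 2 powr (-(2*(real m + 1)))"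
proof -
  have "2 powr (2*(real m + 1)) = 2 powr (real (2*(m+1)))" by (simp add: algebra_simps)
  also have "\<dots> = (2::real)^(2*(m+1))" by (rule powr_realpow) simp
  also have "\<dots> = 4^(m+1)" by (simp add: power_mult)
  finally have "2 powr (-(2*(real m + 1))) = inverse (4^(m+1))" by (simp only: powr_minus)
  then show ?thesis by (simp add: power_one_over inverse_eq_divide)
qed

text \<open>Either the level-\<open>n0\<close> ancestor is not yet polarized (\<open>z > d\<close>), or the last \<open>m\<close> bits
  of \<open>i\<close> contain fewer than \<open>log\<^sub>2 T\<close> ones.\<close>
lemma unreliable_indicator_le:
  fixes T :: real and m n0 i :: nat
  assumes eps: "0 \<le> eps" "eps \<le> 1" and T: "0 < T"
  defines "d \<equiv> (1/4::real)^(m+1)" and "z \<equiv> bhatt eps n0 (i div 2^m)"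
  shows "of_bool (bhatt eps (n0+m) i > 2 powr (-T))
    \<le> z/(1-d) + sqrt (z*(1-z)) * sqrt (2/d) + T * (1/2) ^ popcount m i"
proof -
  have d: "0 < d" "d \<le> 1/2" unfolding d_def by (auto intro: order.trans[OF power_le_one])
  have d_powr: "d = 2 powr (-(2*(real m + 1)))" unfolding d_def by (rule quarter_power_eq_powr)
  have z: "0 \<le> z" "z \<le> 1" using bhatt_bounds[OF eps] by (auto simp: z_def)
  have "0 \<le> z/(1-d) + sqrt (z*(1-z)) * sqrt (2/d)" using z d by simp
  moreover have "0 \<le> T * (1/2) ^ popcount m i" using T by simp
  moreover have "d < z \<or> 2 ^ popcount m i < T" if unreliable: "bhatt eps (n0+m) i > 2 powr (-T)"
  proof (rule ccontr)
    assume "\<not> (d < z \<or> 2 ^ popcount m i < T)"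
    then have polarized: "z \<le> 2 powr (-(2*(real m + 1)))" and few: "T \<le> 2 ^ popcount m i"
      by (auto simp: d_powr)
    have "bhatt eps (n0+m) i \<le> 2 powr (-(2*(real m+1) - (real m - real (popcount m i))) * 2 ^ popcount m i)"
      using polarized unfolding z_def by (rule bhatt_descendant_le[OF eps])
    also have "\<dots> \<le> 2 powr (-T)"
    proof (intro powr_mono)
      have "1 * 2 ^ popcount m i \<le> (2*(real m+1) - (real m - real (popcount m i))) * 2 ^ popcount m i"
        by (intro mult_right_mono) auto
      then show "-(2*(real m+1) - (real m - real (popcount m i))) * 2 ^ popcount m i \<le> -T"
        using few by linarith
    qed auto
    finally show False using unreliable by simp
  qed
  moreover have "1 \<le> z/(1-d) + sqrt (z*(1-z)) * sqrt (2/d)" if "d < z"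
    using one_le_mean_plus_potential z d that by simp
  moreover have "1 < T * (1/2) ^ popcount m i" if "2 ^ popcount m i < T"
    using that by (simp add: field_simps)
  ultimately show ?thesis by (cases "bhatt eps (n0+m) i > 2 powr (-T)") fastforce+
qed

lemma card_unreliable_le:
  fixes T :: real and m n0 :: nat
  assumes eps: "0 \<le> eps" "eps \<le> 1" and T: "0 < T"
  defines "d \<equiv> (1/4::real)^(m+1)"
  shows "real (card {i. i < 2^(n0+m) \<and> bhatt eps (n0+m) i > 2 powr (-T)})
     \<le> 2^(n0+m) * (eps/(1-d) + sqrt (2/d) * (7/8)^n0 + T * (3/4)^m)"
proof -
  let ?Z = "bhatt eps n0"
  define g where "g = (\<lambda>z::real. z/(1-d) + sqrt (z*(1-z)) * sqrt (2/d))"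
  have "real (card {i. i < 2^(n0+m) \<and> bhatt eps (n0+m) i > 2 powr (-T)})
      = (\<Sum>i<2^(n0+m). of_bool (bhatt eps (n0+m) i > 2 powr (-T)))"
    by (simp add: Int_def)
  also have "\<dots> \<le> (\<Sum>i<2^n0 * 2^m. g (?Z (i div 2^m)) + T * (1/2) ^ popcount m i)"
    unfolding g_def d_def power_add[of 2 n0 m] by (intro sum_mono unreliable_indicator_le eps T)
  also have "\<dots> = (\<Sum>k<2^n0. \<Sum>r<2^m. g (?Z k) + T * (1/2) ^ popcount m r)"
    by (simp add: sum_lessThan_mult_blocks popcount_mult_pow2_add)
  also have "\<dots> = 2^m * (\<Sum>k<2^n0. ?Z k) / (1-d) + 2^m * sqrt (2/d) * (\<Sum>k<2^n0. sqrt (?Z k * (1 - ?Z k)))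
      + T * 2^n0 * (\<Sum>r<2^m. (1/2::real) ^ popcount m r)"
    by (simp add: g_def sum.distrib sum_distrib_left sum_divide_distrib algebra_simps)
  also have "\<dots> \<le> 2^m * (2^n0 * eps) / (1-d) + 2^m * sqrt (2/d) * (7/4)^n0 + T * 2^n0 * (3/2)^m"
  proof -
    have "sqrt (eps * (1 - eps)) \<le> 1" using eps by (simp add: mult_le_one)
    then have "(7/4)^n0 * sqrt (eps * (1 - eps)) \<le> (7/4::real)^n0 * 1" by (intro mult_left_mono) auto
    then have "(\<Sum>k<2^n0. sqrt (?Z k * (1 - ?Z k))) \<le> (7/4)^n0"
      using sum_bhatt_potential_le[OF eps, of n0] by linarith
    moreover have "0 \<le> sqrt (2/d)" by (simp add: d_def)
    ultimately show ?thesis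
      by (simp add: sum_bhatt sum_half_pow_popcount mult_left_mono)
  qed
  also have "\<dots> = 2^(n0+m) * (eps/(1-d) + sqrt (2/d) * (7/8)^n0 + T * (3/4)^m)"
  proof -
    have "(4::real)^m = 2^m * 2^m" "(8::real)^n0 = 2^n0 * 4^n0"
      by (simp_all flip: power_mult_distrib)
    then show ?thesis by (simp add: power_add algebra_simps power_divide)
  qed
  finally show ?thesis .
qed

definition polarization_error :: "real \<Rightarrow> nat \<Rightarrow> real" where
  "polarization_error D m =
     2 * (1/4)^(m+1) + sqrt 2 * 2^(m+1) * (7/8)^(6*m) + D * ((7*real m + 6) * (3/4)^m)"

lemma polarization_error_tendsto_zero: "polarization_error D \<longlonglongrightarrow> 0"
proof -
  have geometric: "2 * (1/4::real)^(m+1) + sqrt 2 * 2^(m+1) * (7/8)^(6*m)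
      = 1/2 * (1/4)^m + 2 * sqrt 2 * (2 * (7/8)^6)^m" for m :: nat
    by (simp add: power_mult power_mult_distrib)
  have "(\<lambda>m::nat. 1/2 * (1/4::real)^m + 2 * sqrt 2 * (2 * (7/8)^6)^m) \<longlonglongrightarrow> 1/2 * 0 + 2 * sqrt 2 * 0"
    by (intro tendsto_intros LIMSEQ_power_zero) (auto simp: power_divide)
  then have "(\<lambda>m::nat. 2 * (1/4::real)^(m+1) + sqrt 2 * 2^(m+1) * (7/8)^(6*m)) \<longlonglongrightarrow> 0"
    unfolding geometric by simp
  moreover have "(\<lambda>m::nat. (7*real m + 6) * (3/4::real)^m) \<longlonglongrightarrow> 0" by real_asymp
  ultimately have "(\<lambda>m::nat. (2 * (1/4::real)^(m+1) + sqrt 2 * 2^(m+1) * (7/8)^(6*m))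
      + D * ((7*real m + 6) * (3/4)^m)) \<longlonglongrightarrow> 0 + D * 0"
    by (intro tendsto_intros)
  then show ?thesis by (simp add: polarization_error_def[abs_def])
qed

text \<open>Split \<open>n = n0 + m\<close> with \<open>m = n div 7\<close>: the first \<open>n0\<close> levels polarize, the last \<open>m\<close>
  levels drive the good channels below \<open>2\<^sup>-\<^sup>D\<^sup>n\<close>.\<close>
lemma card_unreliable_le_polarization_error:
  fixes eps D :: real
  assumes eps: "0 \<le> eps" "eps \<le> 1" and D: "0 < D" and "0 < n"
  shows "real (card {i. i < 2^n \<and> bhatt eps n i > 2 powr (-(D * real n))})
    \<le> 2^n * (eps + polarization_error D (n div 7))"
proof -
  define m where "m = n div 7"
  define n0 where "n0 = n - m"
  define d where "d = (1/4::real)^(m+1)"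
  have n_split: "n = n0 + m" and "6*m \<le> n0" and "real n \<le> 7*real m + 6"
    unfolding n0_def m_def by linarith+
  have d: "0 < d" "d \<le> 1/4" unfolding d_def by (auto intro: order.trans[OF power_le_one])
  have "0 < D * real n" using assms(4) D by simp
  then have "real (card {i. i < 2^n \<and> bhatt eps n i > 2 powr (-(D * real n))})
      \<le> 2^n * (eps/(1-d) + sqrt (2/d) * (7/8)^n0 + (D * real n) * (3/4)^m)"
    unfolding n_split d_def by (rule card_unreliable_le[OF eps])
  also have "\<dots> \<le> 2^n * (eps + polarization_error D m)"
  proof -
    have "eps*d \<le> 1*d" using eps d by (intro mult_right_mono) auto
    also have "\<dots> \<le> 2*d*(1-d)" using d by (simp add: algebra_simps)
    finally have "eps/(1-d) \<le> eps + 2*d" using d by (simp add: field_simps)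
    moreover have "sqrt (2/d) * (7/8)^n0 \<le> sqrt 2 * 2^(m+1) * (7/8)^(6*m)"
    proof -
      have "(4::real)^(m+1) = (2^(m+1))^2"
        unfolding power2_eq_square power_mult_distrib[symmetric] by simp
      then have "2/d = 2 * (2^(m+1))^2" by (simp add: d_def power_one_over)
      then have "sqrt (2/d) = sqrt 2 * 2^(m+1)" by (simp only: real_sqrt_mult real_sqrt_abs) simp
      then show ?thesis using \<open>6*m \<le> n0\<close> by (simp add: mult_left_mono power_decreasing)
    qed
    moreover have "(D * real n) * (3/4)^m \<le> D * ((7*real m + 6) * (3/4)^m)"
      using \<open>real n \<le> 7*real m + 6\<close> D by (simp add: mult_right_mono)
    ultimately have "eps/(1-d) + sqrt (2/d) * (7/8)^n0 + (D * real n) * (3/4)^m \<le> eps + polarization_error D m"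
      unfolding polarization_error_def d_def by linarith
    then show ?thesis by simp
  qed
  finally show ?thesis unfolding m_def .
qed

lemma eventually_card_unreliable_le:
  fixes eps gam D :: real
  assumes eps: "0 \<le> eps" "eps \<le> 1" and "0 < gam" and D: "0 < D"
  shows "eventually (\<lambda>n. real (card {i. i < 2^n \<and> bhatt eps n i > 2 powr (-(D * real n))})
           \<le> 2^n * (eps + gam)) sequentially"
proof -
  obtain M where M: "\<And>m. m \<ge> M \<Longrightarrow> polarization_error D m < gam"
    using order_tendstoD(2)[OF polarization_error_tendsto_zero \<open>0 < gam\<close>]
    unfolding eventually_sequentially by blast
  have "real (card {i. i < 2^n \<and> bhatt eps n i > 2 powr (-(D * real n))}) \<le> 2^n * (eps + gam)"
    if "n \<ge> 7*M + 1" for n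
  proof -
    have "real (card {i. i < 2^n \<and> bhatt eps n i > 2 powr (-(D * real n))})
        \<le> 2^n * (eps + polarization_error D (n div 7))"
      using that by (intro card_unreliable_le_polarization_error[OF eps D]) simp
    also have "\<dots> \<le> 2^n * (eps + gam)"
    proof -
      have "M \<le> n div 7" using that by linarith
      then show ?thesis using M by (simp add: less_imp_le)
    qed
    finally show ?thesis .
  qed
  then show ?thesis unfolding eventually_sequentially by blast
qed

lemma exists_below_outside:
  fixes f :: "nat \<Rightarrow> 'a::linorder"
  assumes A: "A \<subseteq> {..<N}" and small: "card {i. i < N \<and> t < f i} + card A < N"
  shows "\<exists>j<N. j \<notin> A \<and> f j \<le> t"
proof (rule ccontr)
  assume "\<not> ?thesis"
  then have outside: "{..<N} - A \<subseteq> {i. i < N \<and> t < f i}" by auto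
  have "N - card A = card ({..<N} - A)" using card_Diff_subset[OF finite_subset[OF A] A] by simp
  also have "\<dots> \<le> card {i. i < N \<and> t < f i}" using outside by (intro card_mono) auto
  finally show False using small by linarith
qed

lemma eventually_reliable_frozen_index:
  fixes eps R D :: real
  assumes eps: "0 \<le> eps" "eps \<le> 1" and "R < 1 - eps" "0 < D"
    and rate: "(\<lambda>n. real (K n) / 2^n) \<longlonglongrightarrow> R"
    and arikan: "\<forall>n. arikan_info_set eps n (K n) (A n)"
  shows "eventually (\<lambda>n. \<exists>j<2^n. j \<notin> A n \<and> bhatt eps n j \<le> 2 powr (-(D * real n))) sequentially"
proof -
  define gam where "gam = (1 - eps - R) / 3"
  have "0 < gam" using assms(3) unfolding gam_def by simp
  have "eventually (\<lambda>n. real (K n) / 2^n < R + gam) sequentially"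
    using order_tendstoD(2)[OF rate] \<open>0 < gam\<close> by simp
  with eventually_card_unreliable_le[OF eps \<open>0 < gam\<close> \<open>0 < D\<close>]
  have "eventually (\<lambda>n. real (card {i. i < 2^n \<and> bhatt eps n i > 2 powr (-(D * real n))}) \<le> 2^n * (eps + gam)
      \<and> real (K n) / 2^n < R + gam) sequentially"
    by (rule eventually_conj)
  then show ?thesis
  proof (rule eventually_mono)
    fix n
    let ?B = "{i. i < 2^n \<and> 2 powr (-(D * real n)) < bhatt eps n i}"
    assume "real (card ?B) \<le> 2^n * (eps + gam) \<and> real (K n) / 2^n < R + gam"
    then have "real (card ?B) + real (card (A n)) < 2^n * (eps + gam) + 2^n * (R + gam)"
      using arikan unfolding arikan_info_set_def by (simp add: field_simps)
    also have "\<dots> = 2^n * (1 - gam)" unfolding gam_def by (simp add: field_simps)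
    also have "\<dots> \<le> 2^n" using \<open>0 < gam\<close> by simp
    finally have "real (card ?B + card (A n)) < real ((2::nat)^n)" by simp
    then have "card ?B + card (A n) < 2^n" by (simp only: of_nat_less_iff)
    then show "\<exists>j<2^n. j \<notin> A n \<and> bhatt eps n j \<le> 2 powr (-(D * real n))"
      using arikan unfolding arikan_info_set_def by (intro exists_below_outside) auto
  qed
qed

section \<open>Successive cancellation and peeling on the full factor graph\<close>

text \<open>\<open>kn s j\<close> stands for "\<open>v\<^sup>(\<^sup>s\<^sup>)\<^sub>j\<close> is known or frozen"; the five implications are the
  peeling rules of the two checks of the stage-\<open>s\<close> butterfly \<open>(a, a + 2\<^sup>s)\<close>.\<close>
definition butterfly_closed :: "nat \<Rightarrow> (nat \<Rightarrow> nat \<Rightarrow> bool) \<Rightarrow> bool" where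
  "butterfly_closed n kn \<longleftrightarrow> (\<forall>s a. s < n \<longrightarrow> a < 2^n \<longrightarrow> even (a div 2^s) \<longrightarrow>
     (kn s a \<and> kn s (a + 2^s) \<longrightarrow> kn (Suc s) a) \<and>
     (kn s a \<and> kn (Suc s) a \<longrightarrow> kn s (a + 2^s)) \<and>
     (kn s (a + 2^s) \<and> kn (Suc s) a \<longrightarrow> kn s a) \<and>
     (kn s (a + 2^s) \<longrightarrow> kn (Suc s) (a + 2^s)) \<and>
     (kn (Suc s) (a + 2^s) \<longrightarrow> kn s (a + 2^s)))"

lemma butterfly_closedD:
  assumes "butterfly_closed n kn" "s < n" "a < 2^n" "even (a div 2^s)"
  shows "kn s a \<Longrightarrow> kn s (a + 2^s) \<Longrightarrow> kn (Suc s) a"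
    and "kn s a \<Longrightarrow> kn (Suc s) a \<Longrightarrow> kn s (a + 2^s)"
    and "kn s (a + 2^s) \<Longrightarrow> kn (Suc s) a \<Longrightarrow> kn s a"
    and "kn s (a + 2^s) \<Longrightarrow> kn (Suc s) (a + 2^s)"
    and "kn (Suc s) (a + 2^s) \<Longrightarrow> kn s (a + 2^s)"
  using assms unfolding butterfly_closed_def by blast+

lemma butterfly_closedI:
  assumes "\<And>s a. s < n \<Longrightarrow> a < 2^n \<Longrightarrow> even (a div 2^s) \<Longrightarrow> kn s a \<Longrightarrow> kn s (a + 2^s) \<Longrightarrow> kn (Suc s) a"
    and "\<And>s a. s < n \<Longrightarrow> a < 2^n \<Longrightarrow> even (a div 2^s) \<Longrightarrow> kn s a \<Longrightarrow> kn (Suc s) a \<Longrightarrow> kn s (a + 2^s)"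
    and "\<And>s a. s < n \<Longrightarrow> a < 2^n \<Longrightarrow> even (a div 2^s) \<Longrightarrow> kn s (a + 2^s) \<Longrightarrow> kn (Suc s) a \<Longrightarrow> kn s a"
    and "\<And>s a. s < n \<Longrightarrow> a < 2^n \<Longrightarrow> even (a div 2^s) \<Longrightarrow> kn s (a + 2^s) \<Longrightarrow> kn (Suc s) (a + 2^s)"
    and "\<And>s a. s < n \<Longrightarrow> a < 2^n \<Longrightarrow> even (a div 2^s) \<Longrightarrow> kn (Suc s) (a + 2^s) \<Longrightarrow> kn s (a + 2^s)"
  shows "butterfly_closed n kn"
  using assms unfolding butterfly_closed_def by blast

lemma butterfly_closed_even_half:
  assumes "butterfly_closed (Suc n) kn"
  shows "butterfly_closed n (\<lambda>s j. kn (Suc s) (2*j))"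
  unfolding butterfly_closed_def
  apply (intro allI impI)
  subgoal premises bounds for s a
  proof -
    have stage: "Suc s < Suc n" "2*a < 2^Suc n" "even (2*a div 2^Suc s)" using bounds by auto
    have partner: "2*a + 2^Suc s = 2*(a + 2^s)" by simp
    show ?thesis using butterfly_closedD[OF assms stage, unfolded partner] by blast
  qed
  done

lemma butterfly_closed_odd_half:
  assumes "butterfly_closed (Suc n) kn"
  shows "butterfly_closed n (\<lambda>s j. kn (Suc s) (Suc (2*j)))"
  unfolding butterfly_closed_def
  apply (intro allI impI)
  subgoal premises bounds for s a
  proof -
    have stage: "Suc s < Suc n" "Suc (2*a) < 2^Suc n" "even (Suc (2*a) div 2^Suc s)"
      using bounds by (auto simp: div_mult2_eq)
    have partner: "Suc (2*a) + 2^Suc s = Suc (2*(a + 2^s))" by simp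
    show ?thesis using butterfly_closedD[OF assms stage, unfolded partner] by blast
  qed
  done

text \<open>\<open>X\<close> is the set of erased positions of the last layer \<open>v\<^sup>(\<^sup>n\<^sup>)\<close>. On the BEC, successive
  cancellation fails to recover \<open>u\<^sub>i\<close> from \<open>u\<^sub><\<^sub>i\<close> iff \<open>sc_erased n X i\<close>: stage 0 splits the
  graph into the even and the odd half, and \<open>u\<^sub>2\<^sub>k\<close> needs both halves while \<open>u\<^sub>2\<^sub>k\<^sub>+\<^sub>1\<close> needs
  only one. This is the same recursion as for \<open>bhatt\<close>.\<close>
fun sc_erased :: "nat \<Rightarrow> nat set \<Rightarrow> nat \<Rightarrow> bool" where
  "sc_erased 0 X i = (0 \<in> X)"
| "sc_erased (Suc n) X i =
     (if even i then sc_erased n {j. 2*j \<in> X} (i div 2) \<or> sc_erased n {j. Suc (2*j) \<in> X} (i div 2)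
      else sc_erased n {j. 2*j \<in> X} (i div 2) \<and> sc_erased n {j. Suc (2*j) \<in> X} (i div 2))"

lemma butterfly_closed_stage0:
  assumes "butterfly_closed (Suc n) kn" "k < 2^n"
  shows "kn 0 (2*k) \<Longrightarrow> kn 0 (Suc (2*k)) \<Longrightarrow> kn (Suc 0) (2*k)"
    and "kn 0 (2*k) \<Longrightarrow> kn (Suc 0) (2*k) \<Longrightarrow> kn 0 (Suc (2*k))"
    and "kn 0 (Suc (2*k)) \<Longrightarrow> kn (Suc 0) (2*k) \<Longrightarrow> kn 0 (2*k)"
    and "kn 0 (Suc (2*k)) \<Longrightarrow> kn (Suc 0) (Suc (2*k))"
    and "kn (Suc 0) (Suc (2*k)) \<Longrightarrow> kn 0 (Suc (2*k))"
proof -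
  have "2*k < 2^Suc n" "even (2*k div 2^0)" using assms(2) by simp_all
  note stage0 = butterfly_closedD[OF assms(1) zero_less_Suc this]
  show "kn 0 (2*k) \<Longrightarrow> kn 0 (Suc (2*k)) \<Longrightarrow> kn (Suc 0) (2*k)"
    using stage0(1) by simp
  show "kn 0 (2*k) \<Longrightarrow> kn (Suc 0) (2*k) \<Longrightarrow> kn 0 (Suc (2*k))"
    using stage0(2) by simp
  show "kn 0 (Suc (2*k)) \<Longrightarrow> kn (Suc 0) (2*k) \<Longrightarrow> kn 0 (2*k)"
    using stage0(3) by simp
  show "kn 0 (Suc (2*k)) \<Longrightarrow> kn (Suc 0) (Suc (2*k))"
    using stage0(4) by simp
  show "kn (Suc 0) (Suc (2*k)) \<Longrightarrow> kn 0 (Suc (2*k))"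
    using stage0(5) by simp
qed

lemma known_if_not_sc_erased:
  assumes "butterfly_closed n kn" and "\<forall>j<2^n. j \<notin> X \<longrightarrow> kn n j" and "i < 2^n"
    and "\<forall>j<i. kn 0 j" and "\<not> sc_erased n X i"
  shows "kn 0 i"
  using assms
proof (induction n arbitrary: kn X i)
  case 0
  then show ?case by simp
next
  case (Suc n)
  define k where "k = i div 2"
  have k: "k < 2^n" using Suc.prems(3) unfolding k_def by simp
  note stage0 = butterfly_closed_stage0[OF Suc.prems(1)]
  let ?even = "\<lambda>s j. kn (Suc s) (2*j)" and ?odd = "\<lambda>s j. kn (Suc s) (Suc (2*j))"
  have halves: "butterfly_closed n ?even" "butterfly_closed n ?odd"
    using Suc.prems(1) by (rule butterfly_closed_even_half, rule butterfly_closed_odd_half)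
  have channel: "\<forall>j<2^n. j \<notin> {j. 2*j \<in> X} \<longrightarrow> ?even n j" "\<forall>j<2^n. j \<notin> {j. Suc (2*j) \<in> X} \<longrightarrow> ?odd n j"
    using Suc.prems(2) by auto
  have earlier: "\<forall>j<k. ?even 0 j" "\<forall>j<k. ?odd 0 j"
  proof (safe)
    fix j assume "j < k"
    then have j: "j < 2^n" and "kn 0 (2*j)" "kn 0 (Suc (2*j))"
      using k Suc.prems(4) unfolding k_def by auto
    then show "?even 0 j" "?odd 0 j" using stage0(1,4)[OF j] by blast+
  qed
  note IH = Suc.IH[OF halves(1) channel(1) k earlier(1)] Suc.IH[OF halves(2) channel(2) k earlier(2)]
  show ?case
  proof (cases "even i")
    case True
    then have "?even 0 k" "?odd 0 k" using IH Suc.prems(5) unfolding k_def by auto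
    then have "kn 0 (2*k)" using stage0(3,5)[OF k] by blast
    then show ?thesis using True unfolding k_def by simp
  next
    case False
    then have "2*k < i" unfolding k_def by presburger
    then have "kn 0 (2*k)" using Suc.prems(4) by blast
    moreover have "?even 0 k \<or> ?odd 0 k" using IH Suc.prems(5) False unfolding k_def by auto
    ultimately have "kn 0 (Suc (2*k))" using stage0(2,5)[OF k] by blast
    then show ?thesis using False unfolding k_def by simp
  qed
qed

lemma butterfly_partner_less:
  fixes a :: nat
  assumes a: "a < 2^n" and s: "s < n" and ev: "even (a div 2^s)"
  shows "a + 2^s < 2^n"
proof -
  define q where "q = a div 2^s"
  have a_eq: "a = q*2^s + a mod 2^s" unfolding q_def by (rule div_mult_mod_eq[symmetric])
  have pw: "(2::nat)^n = 2^(n-s) * 2^s" using s by (simp flip: power_add)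
  have "q < 2^(n-s)" unfolding q_def using a pw by (simp add: div_less_iff_less_mult)
  moreover have "even ((2::nat)^(n-s))" "even q" using s ev by (simp_all add: q_def)
  ultimately have "q + 2 \<le> 2^(n-s)" by presburger
  then have "(q+2)*2^s \<le> 2^(n-s)*2^s" by (intro mult_right_mono) auto
  moreover have "a + 2^s < (q+2)*2^s"
  proof -
    have "a mod 2^s < 2^s" "(q+2)*2^s = q*2^s + 2^s + 2^s" by (simp_all add: algebra_simps)
    then show ?thesis using a_eq by linarith
  qed
  ultimately show ?thesis using pw by linarith
qed

lemma butterfly_closed_all_layers:
  assumes closed: "butterfly_closed n kn" and input: "\<forall>j<2^n. kn 0 j"
  shows "s \<le> n \<Longrightarrow> j < 2^n \<Longrightarrow> kn s j"
proof (induction s arbitrary: j)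
  case 0 then show ?case using input by simp
next
  case (Suc s)
  have s: "s < n" using Suc.prems by simp
  show ?case
  proof (cases "even (j div 2^s)")
    case True
    have "j + 2^s < 2^n" by (rule butterfly_partner_less[OF Suc.prems(2) s True])
    then have "kn s j" "kn s (j + 2^s)" using Suc.IH s Suc.prems by auto
    then show ?thesis by (rule butterfly_closedD(1)[OF closed s Suc.prems(2) True])
  next
    case False
    then have "j \<ge> 2^s" by (metis div_greater_zero_iff odd_pos)
    define a where "a = j - 2^s"
    have aj: "a + 2^s = j" unfolding a_def using \<open>j \<ge> 2^s\<close> by simp
    then have "j div 2^s = a div 2^s + 1" by auto
    then have "even (a div 2^s)" using False by simp
    moreover have "a < 2^n" using Suc.prems(2) aj by linarith
    moreover have "kn s j" using Suc.IH s Suc.prems by auto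
    ultimately show ?thesis using butterfly_closedD(4)[OF closed s] aj by blast
  qed
qed

lemma known_init_butterfly:
  assumes c: "c \<in> gchecks (init_graph n A)" and v: "v \<in> butterfly_nbr c"
    and others: "\<forall>u\<in>butterfly_nbr c - {v}. u \<in> frozen n A \<or> known n (init_graph n A) E u"
  shows "v \<in> frozen n A \<or> known n (init_graph n A) E v"
proof (cases "v \<in> frozen n A")
  case False
  then have "v \<in> gnbr (init_graph n A) c" using v by (simp add: init_graph_def)
  moreover have "\<forall>u\<in>gnbr (init_graph n A) c - {v}. known n (init_graph n A) E u"
    using others by (auto simp: init_graph_def)
  ultimately show ?thesis using c by (blast intro: known.peel)
qed simp

lemma butterfly_closed_init_graph:
  "butterfly_closed n (\<lambda>s j. (s, j) \<in> frozen n A \<or> known n (init_graph n A) E (s, j))"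
proof (rule butterfly_closedI)
  let ?k = "\<lambda>u. u \<in> frozen n A \<or> known n (init_graph n A) E u"
  fix s a :: nat assume "s < n" "a < 2^n" "even (a div 2^s)"
  then have "(s, a, False) \<in> gchecks (init_graph n A)" "(s, a, True) \<in> gchecks (init_graph n A)"
    by (auto simp: init_graph_def)
  note upper = known_init_butterfly[OF this(1)] and lower = known_init_butterfly[OF this(2)]
  have nbr: "butterfly_nbr (s, a, False) = {(s, a), (s, a + 2^s), (Suc s, a)}"
    "butterfly_nbr (s, a, True) = {(s, a + 2^s), (Suc s, a + 2^s)}"
    by (simp_all add: butterfly_nbr_def)
  show "?k (s, a) \<Longrightarrow> ?k (s, a + 2^s) \<Longrightarrow> ?k (Suc s, a)"
    using upper[of "(Suc s, a)"] unfolding nbr by auto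
  show "?k (s, a) \<Longrightarrow> ?k (Suc s, a) \<Longrightarrow> ?k (s, a + 2^s)"
    using upper[of "(s, a + 2^s)"] unfolding nbr by auto
  show "?k (s, a + 2^s) \<Longrightarrow> ?k (Suc s, a) \<Longrightarrow> ?k (s, a)"
    using upper[of "(s, a)"] unfolding nbr by auto
  show "?k (s, a + 2^s) \<Longrightarrow> ?k (Suc s, a + 2^s)"
    using lower[of "(Suc s, a + 2^s)"] unfolding nbr by auto
  show "?k (Suc s, a + 2^s) \<Longrightarrow> ?k (s, a + 2^s)"
    using lower[of "(s, a + 2^s)"] unfolding nbr by auto
qed

definition erased_positions :: "nat \<Rightarrow> nat set \<Rightarrow> nat set" where
  "erased_positions n E = {j. j < 2^n \<and> erased n E (n, j)}"

lemma init_graph_all_known: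
  assumes not_erased: "\<forall>i\<in>A. \<not> sc_erased n (erased_positions n E) i"
  shows "gvars (init_graph n A) \<subseteq> known_set n (init_graph n A) E"
proof -
  define kn where "kn s j \<longleftrightarrow> (s, j) \<in> frozen n A \<or> known n (init_graph n A) E (s, j)" for s j
  have closed: "butterfly_closed n kn" unfolding kn_def by (rule butterfly_closed_init_graph)
  have channel: "\<forall>j<2^n. j \<notin> erased_positions n E \<longrightarrow> kn n j"
    by (auto simp: kn_def erased_positions_def init_graph_def codeword_def intro: known.channel)
  have "kn 0 i" if "i < 2^n" for i
    using that
  proof (induction i rule: less_induct)
    case (less i)
    then show ?case
      using known_if_not_sc_erased[OF closed channel less.prems] not_erased
      by (cases "i \<in> A") (auto simp: kn_def frozen_def)
  qed
  then have "kn s j" if "s \<le> n" "j < 2^n" for s j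
    using butterfly_closed_all_layers[OF closed] that by blast
  then show ?thesis by (auto simp: kn_def known_set_def init_graph_def)
qed

section \<open>Pruning preserves complete peeling\<close>

lemma hidden_not_codeword: "hidden n v \<Longrightarrow> \<not> codeword n v"
  by (simp add: hidden_def codeword_def)

lemma symdiff_commute: "symdiff S T = symdiff T S"
  by (auto simp: symdiff_def)

lemma known_after_deg1_check:
  assumes c: "c \<in> gchecks G" "gnbr G c = {v0}"
  defines "G' \<equiv> Graph (gvars G - {v0}) (gchecks G - {c}) (\<lambda>d. gnbr G d - {v0})"
  shows "known n G E v \<Longrightarrow> v = v0 \<or> known n G' E v"
proof (induction rule: known.induct)
  case (channel v)
  then show ?case by (cases "v = v0") (auto simp: G'_def intro: known.channel)
next
  case (peel c' v)
  show ?case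
  proof (cases "v = v0")
    case False
    then have "c' \<in> gchecks G'" using peel(1,2) c by (auto simp: G'_def)
    moreover have "v \<in> gnbr G' c'" using peel(2) False by (simp add: G'_def)
    moreover have "\<forall>w\<in>gnbr G' c' - {v}. known n G' E w" using peel(3) by (auto simp: G'_def)
    ultimately show ?thesis by (blast intro: known.peel)
  qed simp
qed

lemma known_after_deg0_hidden:
  assumes h: "hidden n h" "vdeg_checks G h = {}"
  defines "G' \<equiv> Graph (gvars G - {h}) (gchecks G) (gnbr G)"
  shows "known n G E v \<Longrightarrow> v = h \<or> known n G' E v"
proof (induction rule: known.induct)
  case (channel v)
  then show ?case using hidden_not_codeword[OF h(1)]
    by (cases "v = h") (auto simp: G'_def intro: known.channel)
next
  case (peel c' v)
  have "h \<notin> gnbr G c'" using h(2) peel(1) unfolding vdeg_checks_def by blast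
  then have "\<forall>w\<in>gnbr G' c' - {v}. known n G' E w" using peel(3) by (auto simp: G'_def)
  moreover have "c' \<in> gchecks G'" "v \<in> gnbr G' c'" using peel(1,2) by (simp_all add: G'_def)
  ultimately show ?case by (blast intro: known.peel)
qed

lemma known_after_deg1_hidden:
  assumes h: "hidden n h" "vdeg_checks G h = {c}"
  defines "G' \<equiv> Graph (gvars G - {h}) (gchecks G - {c}) (\<lambda>d. gnbr G d - {h})"
  shows "known n G E v \<Longrightarrow> (v \<noteq> h \<longrightarrow> known n G' E v) \<and> (v = h \<longrightarrow> (\<forall>w\<in>gnbr G c - {h}. known n G' E w))"
proof (induction rule: known.induct)
  case (channel v)
  then show ?case using hidden_not_codeword[OF h(1)] by (auto simp: G'_def intro: known.channel)
next
  case (peel c' v)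
  have only_c: "d = c" if "d \<in> gchecks G" "h \<in> gnbr G d" for d
    using h(2) that by (auto simp: vdeg_checks_def)
  show ?case
  proof (cases "c' = c")
    case True
    then show ?thesis using peel(2,3) h(2) by (auto simp: vdeg_checks_def)
  next
    case False
    then have "h \<notin> gnbr G c'" using only_c peel(1) by blast
    then have "v \<noteq> h" "\<forall>w\<in>gnbr G' c' - {v}. known n G' E w" using peel(2,3) by (auto simp: G'_def)
    moreover have "c' \<in> gchecks G'" "v \<in> gnbr G' c'" using peel(1,2) False \<open>v \<noteq> h\<close> by (simp_all add: G'_def)
    ultimately show ?thesis by (blast intro: known.peel)
  qed
qed

lemma known_peel_symdiff:
  assumes "c \<in> gchecks G" "gnbr G c = symdiff S T" "h \<in> S" "h \<in> T" "v \<in> T" "v \<notin> S"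
    and "\<forall>w\<in>S - {h}. known n G E w" "\<forall>w\<in>T - {v, h}. known n G E w"
  shows "known n G E v"
proof (rule known.peel[OF assms(1)])
  show "v \<in> gnbr G c" using assms(2,5,6) by (simp add: symdiff_def)
  show "\<forall>w\<in>gnbr G c - {v}. known n G E w" using assms(2-4,7,8) by (auto simp: symdiff_def)
qed

lemma known_peel_merged_row:
  assumes row: "c \<in> gchecks G" "gnbr G c = symdiff S T" and h: "h \<in> S" "h \<in> T"
    and v: "R = S \<or> R = T" "v \<in> R" "v \<noteq> h" and rest: "\<forall>w\<in>R - {v, h}. known n G E w"
    and side: "(\<forall>w\<in>S - {h}. known n G E w) \<or> (\<forall>w\<in>T - {h}. known n G E w)"
  shows "known n G E v"
proof -
  have from_side: "known n G E v"
    if "gnbr G c = symdiff S' T'" "h \<in> S'" "h \<in> T'" "R = S' \<or> R = T'" "\<forall>w\<in>S' - {h}. known n G E w"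
    for S' T'
  proof (cases "v \<in> S'")
    case True
    then show ?thesis using that(5) v(3) by blast
  next
    case False
    then have "R = T'" using that(4) v(2) by blast
    show ?thesis
      by (rule known_peel_symdiff[OF row(1) that(1-3)]) (use False v rest that(5) \<open>R = T'\<close> in auto)
  qed
  from side show ?thesis
  proof
    assume "\<forall>w\<in>S - {h}. known n G E w"
    then show ?thesis using row(2) h v(1) by (intro from_side) auto
  next
    assume "\<forall>w\<in>T - {h}. known n G E w"
    then show ?thesis using row(2) h v(1) by (intro from_side) (auto simp: symdiff_commute)
  qed
qed

lemma known_after_deg2_hidden:
  assumes h: "hidden n h" "vdeg_checks G h = {c1, c2}" "c1 \<noteq> c2"
  defines "G' \<equiv> Graph (gvars G - {h}) (gchecks G - {c2}) ((gnbr G)(c1 := symdiff (gnbr G c1) (gnbr G c2)))"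
  shows "known n G E v \<Longrightarrow> (v \<noteq> h \<longrightarrow> known n G' E v) \<and>
     (v = h \<longrightarrow> (\<forall>w\<in>gnbr G c1 - {h}. known n G' E w) \<or> (\<forall>w\<in>gnbr G c2 - {h}. known n G' E w))"
proof (induction rule: known.induct)
  case (channel v)
  then show ?case using hidden_not_codeword[OF h(1)] by (auto simp: G'_def intro: known.channel)
next
  case (peel c' v)
  have h_checks: "d \<in> gchecks G \<and> h \<in> gnbr G d \<longleftrightarrow> d = c1 \<or> d = c2" for d
    using h(2) unfolding vdeg_checks_def by blast
  have IH: "known n G' E w" if "w \<in> gnbr G c' - {v}" "w \<noteq> h" for w
    using peel(3) that by blast
  show ?case
  proof (cases "c' = c1 \<or> c' = c2")
    case False
    then have "h \<notin> gnbr G c'" "c' \<in> gchecks G'" using h_checks[of c'] peel(1) by (auto simp: G'_def)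
    then have "v \<noteq> h" "v \<in> gnbr G' c'" "\<forall>w\<in>gnbr G' c' - {v}. known n G' E w"
      using peel(2) IH False by (auto simp: G'_def)
    then show ?thesis using \<open>c' \<in> gchecks G'\<close> by (blast intro: known.peel)
  next
    case c': True
    show ?thesis
    proof (cases "v = h")
      case True
      then show ?thesis using IH c' by blast
    next
      case False
      have "c1 \<in> gchecks G'" using h_checks[of c1] h(3) by (auto simp: G'_def)
      moreover have "gnbr G' c1 = symdiff (gnbr G c1) (gnbr G c2)" by (simp add: G'_def)
      moreover have "h \<in> gnbr G c1" "h \<in> gnbr G c2" using h_checks by blast+
      moreover have "gnbr G c' = gnbr G c1 \<or> gnbr G c' = gnbr G c2" using c' by blast
      moreover note peel(2) False
      moreover have "\<forall>w\<in>gnbr G c' - {v, h}. known n G' E w" using IH by blast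
      moreover have "h \<in> gnbr G c' - {v}" using h_checks[of c'] c' peel(1) False by blast
      then have "(\<forall>w\<in>gnbr G c1 - {h}. known n G' E w) \<or> (\<forall>w\<in>gnbr G c2 - {h}. known n G' E w)"
        using peel(3) by blast
      ultimately have "known n G' E v" by (rule known_peel_merged_row)
      then show ?thesis using False by simp
    qed
  qed
qed

lemma known_peel_replaced:
  assumes "c \<in> gchecks G" "gnbr G c = symdiff (N - {h}) {w}" "v \<in> N" "v \<noteq> h"
    and "\<forall>u\<in>N - {v, h}. known n G E u" "known n G E w"
  shows "known n G E v"
proof (cases "v = w")
  case False
  show ?thesis
  proof (rule known.peel[OF assms(1)])
    show "v \<in> gnbr G c" using assms(2-4) False by (simp add: symdiff_def)
    show "\<forall>u\<in>gnbr G c - {v}. known n G E u" using assms(2,5,6) by (auto simp: symdiff_def)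
  qed
qed (use assms(6) in simp)

lemma known_peel_replacement:
  assumes "c \<in> gchecks G" "gnbr G c = symdiff (N - {h}) {w}" "\<forall>u\<in>N - {h}. known n G E u"
  shows "known n G E w"
proof (cases "w \<in> N - {h}")
  case False
  show ?thesis
  proof (rule known.peel[OF assms(1)])
    show "w \<in> gnbr G c" using assms(2) False by (simp add: symdiff_def)
    show "\<forall>u\<in>gnbr G c - {w}. known n G E u" using assms(2,3) by (auto simp: symdiff_def)
  qed
qed (use assms(3) in blast)

lemma known_after_subst_var:
  assumes c: "c \<in> gchecks G" "gnbr G c = {h, w}" "h \<noteq> w" and h: "\<not> codeword n h"
  defines "G' \<equiv> subst_var h w (Graph (gvars G) (gchecks G - {c}) (gnbr G))"
  shows "known n G E v \<Longrightarrow> (v \<noteq> h \<longrightarrow> known n G' E v) \<and> (v = h \<longrightarrow> known n G' E w)"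
proof (induction rule: known.induct)
  case (channel v)
  then show ?case using h by (auto simp: G'_def subst_var_def intro: known.channel)
next
  case (peel c' v)
  have IH: "known n G' E u" if "u \<in> gnbr G c' - {v}" "u \<noteq> h" for u
    using peel(3) that by blast
  have IH_h: "known n G' E w" if "h \<in> gnbr G c' - {v}"
    using peel(3) that by blast
  have nbr': "gnbr G' d = (if h \<in> gnbr G d then symdiff (gnbr G d - {h}) {w} else gnbr G d)" for d
    by (simp add: G'_def subst_var_def)
  show ?case
  proof (cases "c' = c")
    case True
    then show ?thesis using peel(2) c IH IH_h by auto
  next
    case False
    then have c'G': "c' \<in> gchecks G'" using peel(1) by (simp add: G'_def subst_var_def)
    show ?thesis
    proof (cases "h \<in> gnbr G c'")
      case False
      then have "v \<noteq> h" "v \<in> gnbr G' c'" "\<forall>u\<in>gnbr G' c' - {v}. known n G' E u"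
        using peel(2) IH nbr'[of c'] by auto
      then show ?thesis using c'G' by (blast intro: known.peel)
    next
      case True
      then have row: "gnbr G' c' = symdiff (gnbr G c' - {h}) {w}" using nbr' by simp
      show ?thesis
      proof (cases "v = h")
        case v_h: True
        have "known n G' E w" using IH v_h by (intro known_peel_replacement[OF c'G' row]) blast
        then show ?thesis using v_h by simp
      next
        case False
        then have "known n G' E v"
          using known_peel_replaced[OF c'G' row peel(2) False] IH IH_h True by blast
        then show ?thesis using False by simp
      qed
    qed
  qed
qed

lemma all_known_transfer:
  assumes "\<And>v. known n G E v \<Longrightarrow> v \<noteq> h \<Longrightarrow> known n G' E v"
    and "gvars G \<subseteq> known_set n G E" "gvars G' \<subseteq> gvars G - {h}"
  shows "gvars G' \<subseteq> known_set n G' E"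
  using assms by (auto simp: known_set_def)

lemma prune_step_preserves_all_known:
  assumes "prune_step n G G'" and all_known: "gvars G \<subseteq> known_set n G E"
  shows "gvars G' \<subseteq> known_set n G' E"
  using assms(1)
proof cases
  case (deg1_check c v)
  have "known n G' E x" if "known n G E x" "x \<noteq> v" for x
    using known_after_deg1_check[OF deg1_check(2,3) that(1)] that(2) deg1_check(1) by simp
  then show ?thesis using all_known by (rule all_known_transfer) (auto simp: deg1_check(1))
next
  case (merge_cw c h w)
  have "known n G' E x" if "known n G E x" "x \<noteq> h" for x
    using known_after_subst_var[OF merge_cw(2-4) hidden_not_codeword[OF merge_cw(5)] that(1)] that(2)
      merge_cw(1) by simp
  then show ?thesis using all_known by (rule all_known_transfer) (auto simp: merge_cw(1) subst_var_def)
next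
  case (deg1_hidden h c)
  have "known n G' E x" if "known n G E x" "x \<noteq> h" for x
    using known_after_deg1_hidden[OF deg1_hidden(3,4) that(1)] that(2) deg1_hidden(1) by simp
  then show ?thesis using all_known by (rule all_known_transfer) (auto simp: deg1_hidden(1))
next
  case (deg0_hidden h)
  have "known n G' E x" if "known n G E x" "x \<noteq> h" for x
    using known_after_deg0_hidden[OF deg0_hidden(3,4) that(1)] that(2) deg0_hidden(1) by simp
  then show ?thesis using all_known by (rule all_known_transfer) (auto simp: deg0_hidden(1))
next
  case (deg2_hidden h c1 c2)
  have "known n G' E x" if "known n G E x" "x \<noteq> h" for x
    using known_after_deg2_hidden[OF deg2_hidden(3-5) that(1)] that(2) deg2_hidden(1) by simp
  then show ?thesis using all_known by (rule all_known_transfer) (auto simp: deg2_hidden(1))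
next
  case (merge_hidden c h1 h2)
  have "known n G' E x" if "known n G E x" "x \<noteq> h1" for x
    using known_after_subst_var[OF merge_hidden(2-4) hidden_not_codeword[OF merge_hidden(5)] that(1)]
      that(2) merge_hidden(1) by simp
  then show ?thesis
    using all_known by (rule all_known_transfer) (auto simp: merge_hidden(1) subst_var_def)
qed

lemma prune_steps_preserve_all_known:
  "(prune_step n)\<^sup>*\<^sup>* G G' \<Longrightarrow> gvars G \<subseteq> known_set n G E \<Longrightarrow> gvars G' \<subseteq> known_set n G' E"
  by (induction rule: rtranclp_induct) (auto dest: prune_step_preserves_all_known)

lemma prune_steps_subset:
  "(prune_step n)\<^sup>*\<^sup>* G G' \<Longrightarrow> gvars G' \<subseteq> gvars G \<and> gchecks G' \<subseteq> gchecks G"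
proof (induction rule: rtranclp_induct)
  case (step G' G'')
  from step(2) have "gvars G'' \<subseteq> gvars G' \<and> gchecks G'' \<subseteq> gchecks G'"
    by cases (auto simp: subst_var_def)
  with step(3) show ?case by blast
qed simp

section \<open>Erasure patterns of the BEC\<close>

lemma bitrev_less: "bitrev n j < 2^n"
proof (induction n arbitrary: j)
  case 0 then show ?case by simp
next
  case (Suc n)
  have "(j mod 2) * 2^n \<le> (2::nat)^n" by simp
  moreover have "bitrev (Suc n) j = (j mod 2) * 2^n + bitrev n (j div 2)" by simp
  moreover have "(2::nat)^Suc n = 2 * 2^n" by simp
  ultimately show ?case using Suc[of "j div 2"] by linarith
qed

lemma inj_on_bitrev: "inj_on (bitrev n) {..<2^n}"
proof (induction n)
  case 0 then show ?case by (simp add: inj_on_def)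
next
  case (Suc n)
  show ?case
  proof (rule inj_onI)
    fix x y assume x: "x \<in> {..<2^Suc n}" and y: "y \<in> {..<2^Suc n}"
      and eq: "bitrev (Suc n) x = bitrev (Suc n) y"
    have low: "bitrev n (x div 2) < 2^n" "bitrev n (y div 2) < 2^n" by (rule bitrev_less)+
    have "x mod 2 = y mod 2"
    proof (rule ccontr)
      assume "x mod 2 \<noteq> y mod 2"
      then have "(x mod 2 = 0 \<and> y mod 2 = 1) \<or> (x mod 2 = 1 \<and> y mod 2 = 0)" by auto
      then show False using eq low by auto
    qed
    moreover have "bitrev n (x div 2) = bitrev n (y div 2)" using eq calculation by simp
    then have "x div 2 = y div 2" using Suc x y unfolding inj_on_def by auto
    ultimately show "x = y" by (metis div_mult_mod_eq)
  qed
qed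

lemma bitrev_image: "bitrev n ` {..<2^n} = {..<2^n}"
proof -
  have "bitrev n ` {..<2^n} \<subseteq> {..<2^n}" using bitrev_less by auto
  moreover have "card (bitrev n ` {..<2^n}) = card {..<(2::nat)^n}" using inj_on_bitrev by (rule card_image)
  ultimately show ?thesis by (intro card_subset_eq) auto
qed

definition bec_pattern_prob :: "real \<Rightarrow> nat \<Rightarrow> nat set \<Rightarrow> real" where
  "bec_pattern_prob eps n X = eps ^ card X * (1 - eps) ^ (2^n - card X)"

lemma bec_pattern_prob_nonneg: "0 \<le> eps \<Longrightarrow> eps \<le> 1 \<Longrightarrow> 0 \<le> bec_pattern_prob eps n X"
  by (simp add: bec_pattern_prob_def)

lemma sum_bec_pattern_prob_erased_positions:
  "(\<Sum>E\<in>Pow {..<(2::nat)^n}. bec_pattern_prob eps n E * f (erased_positions n E))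
   = (\<Sum>X\<in>Pow {..<(2::nat)^n}. bec_pattern_prob eps n X * f X)"
proof (rule sum.reindex_bij_witness[where i = "\<lambda>X. bitrev n ` X" and j = "erased_positions n"])
  fix E assume E: "E \<in> Pow {..<(2::nat)^n}"
  show image: "bitrev n ` erased_positions n E = E"
  proof
    show "bitrev n ` erased_positions n E \<subseteq> E" by (auto simp: erased_positions_def erased_def)
    show "E \<subseteq> bitrev n ` erased_positions n E"
    proof
      fix e assume "e \<in> E"
      then obtain j where "j < 2^n" "e = bitrev n j" using E bitrev_image by blast
      then show "e \<in> bitrev n ` erased_positions n E"
        using \<open>e \<in> E\<close> by (auto simp: erased_positions_def erased_def)
    qed
  qed
  show "erased_positions n E \<in> Pow {..<(2::nat)^n}" by (auto simp: erased_positions_def)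
  have "card (erased_positions n E) = card (bitrev n ` erased_positions n E)"
    by (rule card_image[symmetric], rule inj_on_subset[OF inj_on_bitrev]) (auto simp: erased_positions_def)
  then show "bec_pattern_prob eps n (erased_positions n E) * f (erased_positions n E)
      = bec_pattern_prob eps n E * f (erased_positions n E)"
    unfolding image by (simp add: bec_pattern_prob_def)
next
  fix X assume X: "X \<in> Pow {..<(2::nat)^n}"
  show "erased_positions n (bitrev n ` X) = X"
  proof
    show "erased_positions n (bitrev n ` X) \<subseteq> X"
      using X inj_on_bitrev unfolding inj_on_def erased_positions_def erased_def by fastforce
    show "X \<subseteq> erased_positions n (bitrev n ` X)" using X by (auto simp: erased_positions_def erased_def)
  qed
  show "bitrev n ` X \<in> Pow {..<(2::nat)^n}" using bitrev_less by auto
qed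

definition interleave :: "nat set \<Rightarrow> nat set \<Rightarrow> nat set" where
  "interleave Y Z = (\<lambda>j. 2*j) ` Y \<union> (\<lambda>j. Suc (2*j)) ` Z"

lemma interleave_evens: "{j. 2*j \<in> interleave Y Z} = Y"
  by (auto simp: interleave_def) presburger

lemma interleave_odds: "{j. Suc (2*j) \<in> interleave Y Z} = Z"
  by (auto simp: interleave_def) presburger

lemma interleave_evens_odds: "interleave {j. 2*j \<in> X} {j. Suc (2*j) \<in> X} = X"
proof
  show "interleave {j. 2*j \<in> X} {j. Suc (2*j) \<in> X} \<subseteq> X" by (auto simp: interleave_def)
  show "X \<subseteq> interleave {j. 2*j \<in> X} {j. Suc (2*j) \<in> X}"
  proof
    fix x assume "x \<in> X"
    moreover have "x = 2 * (x div 2) \<or> x = Suc (2 * (x div 2))" by presburger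
    ultimately show "x \<in> interleave {j. 2*j \<in> X} {j. Suc (2*j) \<in> X}"
      unfolding interleave_def by (metis (mono_tags, lifting) UnCI image_eqI mem_Collect_eq)
  qed
qed

lemma sum_Pow_interleave:
  "(\<Sum>X\<in>Pow {..<(2::nat)^Suc n}. f X) = (\<Sum>Y\<in>Pow {..<(2::nat)^n}. \<Sum>Z\<in>Pow {..<(2::nat)^n}. f (interleave Y Z))"
proof -
  have "(\<Sum>X\<in>Pow {..<(2::nat)^Suc n}. f X) = (\<Sum>(Y, Z)\<in>Pow {..<(2::nat)^n} \<times> Pow {..<(2::nat)^n}. f (interleave Y Z))"
  proof (rule sum.reindex_bij_witness[where i = "\<lambda>(Y, Z). interleave Y Z" and j = "\<lambda>X. ({j. 2*j \<in> X}, {j. Suc (2*j) \<in> X})"])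
    fix YZ assume YZ: "YZ \<in> Pow {..<(2::nat)^n} \<times> Pow {..<(2::nat)^n}"
    then show "(\<lambda>X. ({j. 2*j \<in> X}, {j. Suc (2*j) \<in> X})) ((\<lambda>(Y, Z). interleave Y Z) YZ) = YZ"
      by (cases YZ) (simp add: interleave_evens interleave_odds)
    from YZ show "(\<lambda>(Y, Z). interleave Y Z) YZ \<in> Pow {..<(2::nat)^Suc n}"
      by (auto simp: interleave_def)
  next
    fix X assume "X \<in> Pow {..<(2::nat)^Suc n}"
    then show "(\<lambda>(Y, Z). interleave Y Z) ({j. 2*j \<in> X}, {j. Suc (2*j) \<in> X}) = X"
      "({j. 2*j \<in> X}, {j. Suc (2*j) \<in> X}) \<in> Pow {..<(2::nat)^n} \<times> Pow {..<(2::nat)^n}"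
      "(case ({j. 2*j \<in> X}, {j. Suc (2*j) \<in> X}) of (Y, Z) \<Rightarrow> f (interleave Y Z)) = f X"
      by (auto simp: interleave_evens_odds)
  qed
  then show ?thesis by (simp add: sum.cartesian_product)
qed

lemma card_interleave: "finite Y \<Longrightarrow> finite Z \<Longrightarrow> card (interleave Y Z) = card Y + card Z"
  unfolding interleave_def
  by (subst card_Un_disjoint) (auto simp: card_image inj_on_def, presburger)

lemma bec_pattern_prob_interleave:
  assumes "Y \<subseteq> {..<2^n}" "Z \<subseteq> {..<2^n}"
  shows "bec_pattern_prob eps (Suc n) (interleave Y Z) = bec_pattern_prob eps n Y * bec_pattern_prob eps n Z"
proof -
  have "finite Y" "finite Z" using assms finite_subset by auto
  moreover have "card Y \<le> 2^n" "card Z \<le> 2^n" using assms card_mono[OF finite_lessThan] by fastforce+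
  then have "2^Suc n - (card Y + card Z) = (2^n - card Y) + (2^n - card Z)" by simp
  ultimately show ?thesis by (simp add: bec_pattern_prob_def card_interleave power_add)
qed

lemma sum_bec_pattern_prob: "(\<Sum>X\<in>Pow {..<(2::nat)^n}. bec_pattern_prob eps n X) = 1"
proof (induction n)
  case 0
  have "Pow {..<(2::nat)^0} = {{}, {0}}" by (auto simp: lessThan_Suc)
  then show ?case by (simp add: bec_pattern_prob_def)
next
  case (Suc n)
  have "(\<Sum>X\<in>Pow {..<(2::nat)^Suc n}. bec_pattern_prob eps (Suc n) X)
      = (\<Sum>Y\<in>Pow {..<(2::nat)^n}. \<Sum>Z\<in>Pow {..<(2::nat)^n}. bec_pattern_prob eps n Y * bec_pattern_prob eps n Z)"
    unfolding sum_Pow_interleave by (intro sum.cong refl) (simp add: bec_pattern_prob_interleave)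
  also have "\<dots> = 1" using Suc by (simp flip: sum_product)
  finally show ?case .
qed

lemma prob_sc_erased:
  "i < 2^n \<Longrightarrow> (\<Sum>X\<in>Pow {..<(2::nat)^n}. bec_pattern_prob eps n X * of_bool (sc_erased n X i)) = bhatt eps n i"
proof (induction n arbitrary: i)
  case 0
  have "Pow {..<(2::nat)^0} = {{}, {0}}" by (auto simp: lessThan_Suc)
  then show ?case by (simp add: bec_pattern_prob_def)
next
  case (Suc n)
  define k where "k = i div 2"
  have k: "k < 2^n" using Suc.prems unfolding k_def by simp
  let ?P = "Pow {..<(2::nat)^n}" and ?w = "bec_pattern_prob eps n" and ?a = "\<lambda>Y. of_bool (sc_erased n Y k) :: real"
  define p where "p = (\<Sum>Y\<in>?P. ?w Y * ?a Y)"
  have p: "p = bhatt eps n k" unfolding p_def by (rule Suc.IH[OF k])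
  have total: "(\<Sum>Y\<in>?P. ?w Y) = 1" by (rule sum_bec_pattern_prob)
  have split: "sc_erased (Suc n) (interleave Y Z) i
      \<longleftrightarrow> (if even i then sc_erased n Y k \<or> sc_erased n Z k else sc_erased n Y k \<and> sc_erased n Z k)" for Y Z
    by (simp add: interleave_evens interleave_odds k_def)
  have "(\<Sum>X\<in>Pow {..<(2::nat)^Suc n}. bec_pattern_prob eps (Suc n) X * of_bool (sc_erased (Suc n) X i))
      = (\<Sum>Y\<in>?P. \<Sum>Z\<in>?P. ?w Y * ?w Z * of_bool (sc_erased (Suc n) (interleave Y Z) i))"
    unfolding sum_Pow_interleave by (intro sum.cong refl) (simp add: bec_pattern_prob_interleave)
  also have "\<dots> = (if even i then p * 1 + 1 * p - p * p else p * p)"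
  proof (cases "even i")
    case True
    have "(\<Sum>Y\<in>?P. \<Sum>Z\<in>?P. ?w Y * ?w Z * of_bool (sc_erased (Suc n) (interleave Y Z) i))
        = (\<Sum>Y\<in>?P. \<Sum>Z\<in>?P. (?w Y * ?a Y) * ?w Z + ?w Y * (?w Z * ?a Z) - (?w Y * ?a Y) * (?w Z * ?a Z))"
      unfolding split using True by (intro sum.cong refl) (simp add: algebra_simps)
    also have "\<dots> = p * 1 + 1 * p - p * p"
      unfolding p_def total[symmetric]
      by (simp add: sum.distrib sum_subtractf sum_product del: sum_mult_of_bool_eq)
    finally show ?thesis using True by simp
  next
    case False
    have "(\<Sum>Y\<in>?P. \<Sum>Z\<in>?P. ?w Y * ?w Z * of_bool (sc_erased (Suc n) (interleave Y Z) i))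
        = (\<Sum>Y\<in>?P. \<Sum>Z\<in>?P. (?w Y * ?a Y) * (?w Z * ?a Z))"
      unfolding split using False by (intro sum.cong refl) simp
    also have "\<dots> = p * p" unfolding p_def by (simp add: sum_product del: sum_mult_of_bool_eq)
    finally show ?thesis using False by simp
  qed
  also have "\<dots> = bhatt eps (Suc n) i"
    by (simp add: p k_def bhatt.simps(2) Let_def power2_eq_square)
  finally show ?case .
qed

lemma prob_some_sc_erased_le:
  assumes A: "A \<subseteq> {..<2^n}" and eps: "0 \<le> eps" "eps \<le> 1"
  shows "(\<Sum>E\<in>Pow {..<(2::nat)^n}. bec_pattern_prob eps n E * of_bool (\<exists>i\<in>A. sc_erased n (erased_positions n E) i))
    \<le> (\<Sum>i\<in>A. bhatt eps n i)"
proof -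
  have "finite A" using A finite_subset by auto
  have "of_bool (\<exists>i\<in>A. Q i) \<le> (\<Sum>i\<in>A. of_bool (Q i) :: real)" for Q
  proof (cases "\<exists>i\<in>A. Q i")
    case True
    then obtain i where "i \<in> A" "Q i" by blast
    then have "of_bool (Q i) \<le> (\<Sum>i\<in>A. of_bool (Q i) :: real)"
      using \<open>finite A\<close> by (intro member_le_sum) auto
    then show ?thesis using \<open>Q i\<close> by simp
  qed simp
  then have "(\<Sum>E\<in>Pow {..<(2::nat)^n}. bec_pattern_prob eps n E * of_bool (\<exists>i\<in>A. sc_erased n (erased_positions n E) i))
      \<le> (\<Sum>E\<in>Pow {..<(2::nat)^n}. bec_pattern_prob eps n E * (\<Sum>i\<in>A. of_bool (sc_erased n (erased_positions n E) i)))"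
    by (intro sum_mono mult_left_mono bec_pattern_prob_nonneg eps)
  also have "\<dots> = (\<Sum>i\<in>A. \<Sum>E\<in>Pow {..<(2::nat)^n}. bec_pattern_prob eps n E * of_bool (sc_erased n (erased_positions n E) i))"
    by (simp only: sum_distrib_left sum.swap[of _ A])
  also have "\<dots> = (\<Sum>i\<in>A. bhatt eps n i)"
  proof (rule sum.cong[OF refl])
    fix i assume "i \<in> A"
    then have "i < 2^n" using A by auto
    then show "(\<Sum>E\<in>Pow {..<(2::nat)^n}. bec_pattern_prob eps n E * of_bool (sc_erased n (erased_positions n E) i))
        = bhatt eps n i"
      unfolding sum_bec_pattern_prob_erased_positions[of eps n "\<lambda>X. of_bool (sc_erased n X i)"]
      by (rule prob_sc_erased)
  qed
  finally show ?thesis .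
qed

section \<open>Cost of a decoder run\<close>

lemma tri_steps_ref_subset:
  "(tri_step G Kn)\<^sup>*\<^sup>* st0 st \<Longrightarrow> fst st0 \<subseteq> gvars G \<Longrightarrow> fst st \<subseteq> gvars G"
proof (induction rule: rtranclp_induct)
  case (step st' st'')
  then have "fst st' \<subseteq> gvars G" by blast
  with step(2) show ?case by cases auto
qed simp

lemma pruned_graph_card_le:
  assumes "pruned_graph n A G"
  shows "finite (gvars G)" "card (gvars G) \<le> (n+1) * 2^n" "card (gchecks G) \<le> 2*n * 2^n"
proof -
  have "gvars G \<subseteq> gvars (init_graph n A)" "gchecks G \<subseteq> gchecks (init_graph n A)"
    using assms prune_steps_subset unfolding pruned_graph_def by blast+
  then have vars: "gvars G \<subseteq> {..n} \<times> {..<2^n}" and checks: "gchecks G \<subseteq> {..<n} \<times> {..<2^n} \<times> UNIV"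
    by (auto simp: init_graph_def)
  show "finite (gvars G)" using vars by (rule finite_subset) simp
  show "card (gvars G) \<le> (n+1) * 2^n"
    using card_mono[OF _ vars] by (simp add: card_cartesian_product)
  show "card (gchecks G) \<le> 2*n * 2^n"
    using card_mono[OF _ checks] by (simp add: card_cartesian_product)
qed

lemma nr_ne_le:
  assumes "valid_run n G E st" and "\<not> gvars G \<subseteq> known_set n G E" and "finite (gvars G)"
  shows "fst (nr_ne n G E st) \<le> card (gvars G)" "snd (nr_ne n G E st) \<le> card (gchecks G)"
proof -
  obtain R D P where st: "st = (R, D, P)" by (cases st)
  have "(tri_step G (known_set n G E))\<^sup>*\<^sup>* ({}, {}, {}) st"
    using assms(1,2) by (simp add: valid_run_def Let_def)
  then have "R \<subseteq> gvars G" using tri_steps_ref_subset st by fastforce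
  then show "fst (nr_ne n G E st) \<le> card (gvars G)" "snd (nr_ne n G E st) \<le> card (gchecks G)"
    using assms(2,3) st by (simp_all add: nr_ne_def Let_def card_mono)
qed

text \<open>If no information bit is erased for successive cancellation, peeling already recovers
  the whole pruned graph, so both \<open>n\<^sub>r\<close> and \<open>n\<^sub>e\<close> vanish.\<close>
lemma run_cost_le:
  fixes q p :: real
  assumes "0 < q" "0 < p" and pruned: "pruned_graph n A G" and run: "valid_run n G E st"
  shows "real (2^n) * log 2 (real (2^n)) * real (fst (nr_ne n G E st)) powr q * real (snd (nr_ne n G E st)) powr p
    \<le> of_bool (\<exists>i\<in>A. sc_erased n (erased_positions n E) i)
       * (2^n * real n * real ((n+1) * 2^n) powr q * real (2*n * 2^n) powr p)"
proof (cases "gvars G \<subseteq> known_set n G E")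
  case True
  then show ?thesis using assms(1,2) by (simp add: nr_ne_def Let_def)
next
  case False
  have "\<exists>i\<in>A. sc_erased n (erased_positions n E) i"
  proof (rule ccontr)
    assume "\<not> ?thesis"
    then have "gvars (init_graph n A) \<subseteq> known_set n (init_graph n A) E"
      by (intro init_graph_all_known) blast
    then show False
      using False pruned prune_steps_preserve_all_known unfolding pruned_graph_def by blast
  qed
  moreover have "fst (nr_ne n G E st) \<le> (n+1) * 2^n" "snd (nr_ne n G E st) \<le> 2*n * 2^n"
    using nr_ne_le[OF run False] pruned_graph_card_le[OF pruned] by (meson le_trans)+
  then have "real (fst (nr_ne n G E st)) \<le> real ((n+1) * 2^n)"
    "real (snd (nr_ne n G E st)) \<le> real (2*n * 2^n)"
    by (simp_all only: of_nat_le_iff)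
  then have "real (fst (nr_ne n G E st)) powr q \<le> real ((n+1) * 2^n) powr q"
    "real (snd (nr_ne n G E st)) powr p \<le> real (2*n * 2^n) powr p"
    using assms(1,2) by (auto intro: powr_mono2)
  ultimately show ?thesis by (simp add: mult_mono)
qed

lemma double_le_two_power: "2 * n \<le> (2::nat)^n"
proof (cases n)
  case (Suc m)
  then show ?thesis using Suc_leI[OF less_exp[of m]] by simp
qed simp

lemma cost_bound_le:
  fixes p q :: real
  assumes "0 < p" "0 < q"
  shows "(2^n * real n * real ((n+1) * 2^n) powr q * real (2*n * 2^n) powr p)
      * (2^n * 2 powr (-((2*p + 2*q + 4) * real n))) \<le> 2 powr (- real n)"
proof -
  define X where "X = (4::real)^n"
  have X: "X = 2^n * 2^n" unfolding X_def by (simp flip: power_mult_distrib)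
  have "real n \<le> 2^n" using less_exp[of n] by (simp add: less_imp_le)
  moreover have "real ((n+1) * 2^n) powr q \<le> X powr q"
  proof -
    have "n + 1 \<le> (2::nat)^n" using Suc_leI[OF less_exp[of n]] by simp
    then have "(n+1) * 2^n \<le> 2^n * (2::nat)^n" by (rule mult_right_mono) simp
    then have "real ((n+1) * 2^n) \<le> real (2^n * 2^n)" by (simp only: of_nat_le_iff)
    then show ?thesis unfolding X using assms by (intro powr_mono2) auto
  qed
  moreover have "real (2*n * 2^n) powr p \<le> X powr p"
  proof -
    have "2*n * 2^n \<le> 2^n * (2::nat)^n" using double_le_two_power[of n] by simp
    then have "real (2*n * 2^n) \<le> real (2^n * 2^n)" by (simp only: of_nat_le_iff)
    then show ?thesis unfolding X using assms by (intro powr_mono2) auto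
  qed
  ultimately have "(2^n * real n * real ((n+1) * 2^n) powr q * real (2*n * 2^n) powr p)
      * (2^n * 2 powr (-((2*p + 2*q + 4) * real n)))
    \<le> (2^n * 2^n * X powr q * X powr p) * (2^n * 2 powr (-((2*p + 2*q + 4) * real n)))"
    by (intro mult_right_mono mult_mono) auto
  also have "\<dots> = 2 powr (- real n)"
  proof -
    have two: "(2::real)^n = 2 powr real n" by (simp add: powr_realpow)
    have "X = 2 powr (2 * real n)" unfolding X two by (simp flip: powr_add)
    then have "X powr q = 2 powr (2 * real n * q)" "X powr p = 2 powr (2 * real n * p)"
      by (simp_all add: powr_powr)
    then show ?thesis unfolding two by (simp flip: powr_add add: algebra_simps)
  qed
  finally show ?thesis .
qed

lemma expected_cost_le:
  fixes eps q p :: real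
  assumes eps: "0 \<le> eps" "eps \<le> 1" and "0 < q" "0 < p"
    and arikan: "arikan_info_set eps n K A" and pruned: "pruned_graph n A G"
    and runs: "\<forall>E. E \<subseteq> {..<2^n} \<longrightarrow> valid_run n G E (run E)"
    and frozen: "j < 2^n" "j \<notin> A" "bhatt eps n j \<le> 2 powr (-((2*p + 2*q + 4) * real n))"
  shows "expected_cost eps q p n G run \<le> 2 powr (- real n)"
proof -
  define M where "M = 2^n * real n * real ((n+1) * 2^n) powr q * real (2*n * 2^n) powr p"
  have A: "A \<subseteq> {..<2^n}" and below_frozen: "\<forall>i\<in>A. bhatt eps n i \<le> bhatt eps n j"
    using arikan frozen(1,2) unfolding arikan_info_set_def by auto
  have "expected_cost eps q p n G run
      \<le> (\<Sum>E\<in>Pow {..<(2::nat)^n}. bec_pattern_prob eps n E * (of_bool (\<exists>i\<in>A. sc_erased n (erased_positions n E) i) * M))"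
    unfolding expected_cost_def bec_pattern_prob_def[symmetric] M_def
    using runs assms(3,4) by (intro sum_mono mult_left_mono run_cost_le[OF _ _ pruned] bec_pattern_prob_nonneg eps) auto
  also have "\<dots> = M * (\<Sum>E\<in>Pow {..<(2::nat)^n}. bec_pattern_prob eps n E * of_bool (\<exists>i\<in>A. sc_erased n (erased_positions n E) i))"
    by (simp only: sum_distrib_left mult_ac)
  also have "\<dots> \<le> M * (\<Sum>i\<in>A. bhatt eps n i)"
    unfolding M_def by (intro mult_left_mono prob_some_sc_erased_le A eps) simp
  also have "\<dots> \<le> M * (2^n * 2 powr (-((2*p + 2*q + 4) * real n)))"
  proof (intro mult_left_mono)
    have "(\<Sum>i\<in>A. bhatt eps n i) \<le> real (card A) * bhatt eps n j"
      using sum_mono[of A _ "\<lambda>_. bhatt eps n j"] below_frozen by simp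
    also have "\<dots> \<le> 2^n * bhatt eps n j"
      using card_mono[OF _ A] bhatt_bounds[OF eps] by (intro mult_right_mono) auto
    also have "\<dots> \<le> 2^n * 2 powr (-((2*p + 2*q + 4) * real n))" using frozen(3) by simp
    finally show "(\<Sum>i\<in>A. bhatt eps n i) \<le> 2^n * 2 powr (-((2*p + 2*q + 4) * real n))" .
  qed (simp add: M_def)
  also have "\<dots> \<le> 2 powr (- real n)" unfolding M_def using assms(4,3) by (rule cost_bound_le)
  finally show ?thesis .
qed

theorem proposition2:
  fixes eps R q p :: real
    and K :: "nat \<Rightarrow> nat"
    and A :: "nat \<Rightarrow> nat set"
    and PG :: "nat \<Rightarrow> graph"
    and run :: "nat \<Rightarrow> nat set \<Rightarrow> tstate"
  assumes "0 < eps" and "eps < 1" and "R < 1 - eps"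
    and "(\<lambda>n. real (K n) / 2 ^ n) \<longlonglongrightarrow> R"
    and "\<forall>n. arikan_info_set eps n (K n) (A n)"
    and "\<forall>n. pruned_graph n (A n) (PG n)"
    and "\<forall>n E. E \<subseteq> {..<2 ^ n} \<longrightarrow> valid_run n (PG n) E (run n E)"
    and "0 < q" and "0 < p"
  shows "(\<lambda>n. expected_cost eps q p n (PG n) (run n)) \<longlonglongrightarrow> 0"
proof -
  have eps: "0 \<le> eps" "eps \<le> 1" using assms(1,2) by simp_all
  have "eventually (\<lambda>n. \<exists>j<2^n. j \<notin> A n \<and> bhatt eps n j \<le> 2 powr (-((2*p + 2*q + 4) * real n))) sequentially"
    using assms(8,9) by (intro eventually_reliable_frozen_index[OF eps assms(3) _ assms(4,5)]) simp
  then have upper: "eventually (\<lambda>n. expected_cost eps q p n (PG n) (run n) \<le> 2 powr (- real n)) sequentially"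
  proof (rule eventually_mono)
    fix n assume "\<exists>j<2^n. j \<notin> A n \<and> bhatt eps n j \<le> 2 powr (-((2*p + 2*q + 4) * real n))"
    then obtain j where "j < 2^n" "j \<notin> A n" "bhatt eps n j \<le> 2 powr (-((2*p + 2*q + 4) * real n))"
      by blast
    then show "expected_cost eps q p n (PG n) (run n) \<le> 2 powr (- real n)"
      using assms(5-7) by (intro expected_cost_le[OF eps assms(8,9)]) auto
  qed
  have "0 \<le> expected_cost eps q p n (PG n) (run n)" for n
    unfolding expected_cost_def using eps by (intro sum_nonneg mult_nonneg_nonneg) auto
  then have lower: "eventually (\<lambda>n. 0 \<le> expected_cost eps q p n (PG n) (run n)) sequentially"
    by (simp add: always_eventually)
  have "(\<lambda>n. 2 powr (- real n)) \<longlonglongrightarrow> (0::real)" by real_asymp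
  then show ?thesis by (rule tendsto_sandwich[OF lower upper tendsto_const])
qed

end
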